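(* Let $d\geq1$ be an integer, $j,j'\in\{0,\dots,d-1\}$, $0<\sigma_q^2<1/2$, $0<\sigma_p^2<1/2$, $\Gamma>0$, $\Lambda=1-4\sigma_q^2\sigma_p^2$, and let $$\boldsymbol\tau=\begin{pmatrix}\frac{i\sigma_p^2\Gamma^2}{2\pi\Lambda}&-\frac12\\-\frac12&\frac{2\pi i\sigma_q^2\Lambda}{\Gamma^2}\end{pmatrix}.$$ Then $$N_{\sigma_q^2,\sigma_p^2,\Gamma,j}=\Theta\!\begin{bmatrix}(\frac{2j}{d},0)^{\top}\\(0,\frac jd)^{\top}\end{bmatrix}\!(\vec0,\boldsymbol\tau),\qquad \langle j'_{\sigma_q^2,\sigma_p^2,\Gamma}|j_{\sigma_q^2,\sigma_p^2,\Gamma}\rangle=\frac{1}{\sqrt{N_{\sigma_q^2,\sigma_p^2,\Gamma,j}N_{\sigma_q^2,\sigma_p^2,\Gamma,j'}}}\,\Theta\!\begin{bmatrix}(\frac{j+j'}{d},0)^{\top}\\(0,\frac{j'}{d})^{\top}\end{bmatrix}\!(\vec0,\boldsymbol\tau).$$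
   Context: Units $\hbar=1$; $\hat q,\hat p$ canonical operators of one bosonic mode, $[\hat q,\hat p]=i$; $|q\rangle_{\hat q}$ generalized position eigenstates with ${}_{\hat q}\langle q|q'\rangle_{\hat q}=\delta(q-q')$. Functions: $G_{\sigma^2}(x)=(2\pi\sigma^2)^{-1/2}e^{-x^2/(2\sigma^2)}$; $(f*g)(x)=\int f(y)g(x-y)dy$; $E_{\mu,\Gamma,a}(x)=e^{-x^2/(2\mu)}\sum_{s\in\mathbb Z}\delta(x-(s+a)\Gamma)$. Riemann theta function with characteristics: for $\vec z\in\mathbb C^n$, symmetric $\boldsymbol\tau\in\mathbb C^{n\times n}$ with $\mathrm{Im}\,\boldsymbol\tau>0$, and $\vec a,\vec b\in\mathbb Q^n$, $\Theta\!\begin{bmatrix}\vec a\\ \vec b\end{bmatrix}\!(\vec z,\boldsymbol\tau)=\sum_{\vec s\in\mathbb Z^n}\exp[\pi i(\vec s+\vec a)^{\top}\boldsymbol\tau(\vec s+\vec a)+2\pi i(\vec z+\vec b)^{\top}(\vec s+\vec a)]$. Standard-form approximate GKP state: $|j_{\sigma_q^2,\sigma_p^2,\Gamma}\rangle$ has position wave function ${}_{\hat q}\langle q|j_{\sigma_q^2,\sigma_p^2,\Gamma}\rangle=\Big(\frac{2\Gamma\Lambda^{-1/2}}{N_{\sigma_q^2,\sigma_p^2,\Gamma,j}}\Big)^{1/2}\big(E_{\frac{\Lambda}{2\sigma_p^2},\Gamma,\frac jd}*G_{2\sigma_q^2}\big)(q)$, where $N_{\sigma_q^2,\sigma_p^2,\Gamma,j}>0$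 is the constant making it unit-norm. *)

theory Defs
  imports "HOL-Analysis.Analysis"
begin

definition gauss :: "real \<Rightarrow> real \<Rightarrow> real" where
  "gauss v x = exp (- x\<^sup>2 / (2 * v)) / sqrt (2 * pi * v)"

text \<open>Convolution of the Dirac comb E_{mu,Gamma,a}(x) = exp(-x^2/(2 mu)) sum_s delta(x-(s+a)Gamma)
  with the Gaussian G_{v}, written out: (E * G)(q) = sum_s exp(-((s+a)Gamma)^2/(2mu)) G_v(q-(s+a)Gamma).\<close>
definition comb_conv_gauss :: "real \<Rightarrow> real \<Rightarrow> real \<Rightarrow> real \<Rightarrow> real \<Rightarrow> real" where
  "comb_conv_gauss \<mu> \<Gamma> a v q =
     (\<Sum>\<^sub>\<infinity>s::int. exp (- ((of_int s + a) * \<Gamma>)\<^sup>2 / (2 * \<mu>)) * gauss v (q - (of_int s + a) * \<Gamma>))"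

definition gkp_Lambda :: "real \<Rightarrow> real \<Rightarrow> real" where
  "gkp_Lambda sq sp = 1 - 4 * sq * sp"

definition gkp_profile :: "real \<Rightarrow> real \<Rightarrow> real \<Rightarrow> nat \<Rightarrow> nat \<Rightarrow> real \<Rightarrow> real" where
  "gkp_profile sq sp \<Gamma> d j q =
     comb_conv_gauss (gkp_Lambda sq sp / (2 * sp)) \<Gamma> (real j / real d) (2 * sq) q"

text \<open>The normalisation constant N: the (unique positive) constant such that the wave function
  sqrt(2 Gamma Lambda^(-1/2) / N) * profile has unit L2 norm, i.e.
  N = 2 Gamma Lambda^(-1/2) * integral of profile^2.\<close>
definition gkp_N :: "real \<Rightarrow> real \<Rightarrow> real \<Rightarrow> nat \<Rightarrow> nat \<Rightarrow> real" where
  "gkp_N sq sp \<Gamma> d j =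
     2 * \<Gamma> / sqrt (gkp_Lambda sq sp) * (LINT q|lborel. (gkp_profile sq sp \<Gamma> d j q)\<^sup>2)"

text \<open>Position wave function of the standard-form approximate GKP state |j_{sq,sp,Gamma}>.\<close>
definition gkp_wf :: "real \<Rightarrow> real \<Rightarrow> real \<Rightarrow> nat \<Rightarrow> nat \<Rightarrow> real \<Rightarrow> real" where
  "gkp_wf sq sp \<Gamma> d j q =
     sqrt (2 * \<Gamma> / sqrt (gkp_Lambda sq sp) / gkp_N sq sp \<Gamma> d j) * gkp_profile sq sp \<Gamma> d j q"

text \<open>Inner product <j'|j> = integral of conj(psi_j'(q)) psi_j(q) dq (wave functions are real).\<close>
definition gkp_inner :: "real \<Rightarrow> real \<Rightarrow> real \<Rightarrow> nat \<Rightarrow> nat \<Rightarrow> nat \<Rightarrow> real" where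
  "gkp_inner sq sp \<Gamma> d j' j = (LINT q|lborel. gkp_wf sq sp \<Gamma> d j' q * gkp_wf sq sp \<Gamma> d j q)"

text \<open>Riemann theta function with rational characteristics in dimension n; vectors are
  functions on {0..<n}, the lattice Z^n is the set of integer functions vanishing from n on.\<close>
definition riemann_theta ::
  "nat \<Rightarrow> (nat \<Rightarrow> rat) \<Rightarrow> (nat \<Rightarrow> rat) \<Rightarrow> (nat \<Rightarrow> complex) \<Rightarrow> (nat \<Rightarrow> nat \<Rightarrow> complex) \<Rightarrow> complex" where
  "riemann_theta n a b z \<tau> =
     (\<Sum>\<^sub>\<infinity>s\<in>{s::nat \<Rightarrow> int. \<forall>i\<ge>n. s i = 0}.
        exp (pi * \<i> * (\<Sum>k<n. \<Sum>l<n. (of_int (s k) + of_rat (a k)) * \<tau> k l * (of_int (s l) + of_rat (a l)))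
             + 2 * pi * \<i> * (\<Sum>k<n. (z k + of_rat (b k)) * (of_int (s k) + of_rat (a k)))))"

end

(*
  With the period matrix tau of the statement, the theta series is a double sum over (n, m) of
  e^(-pi tau00 (n + A)^2) e^(-pi tau11 m^2) e^(2 pi i m (B - (n + A)/2)).  Poisson summation in m,
  for the Gaussian, turns it into a double sum over (n, k) of real Gaussians.  On the other side,
  multiplying out the two combs and integrating each product of Gaussians turns the overlap
  integral of two comb profiles into a double sum over lattice points (s, t) of the comb weights
  times a Gaussian in the distance of the lattice points.  The substitution (n, k) = (s + t, t)
  matches the two double sums term by term, because Lambda = 1 - 4 sq sp makes the exponents agree.

  Poisson summation for the Gaussian follows by comparing Fourier coefficients of its two
  continuous 1-periodic sides; Fourier coefficients determine such a function because
  trigonometric polynomials are uniformly dense in it (Stone-Weierstrass on the circle).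
*)
theory Submission
  imports Defs "HOL-Probability.Probability"
begin

lemma nonneg_summable_on_int:
  fixes f :: "int \<Rightarrow> real"
  assumes "\<And>k. f k \<ge> 0" "summable (\<lambda>n. f (int n))" "summable (\<lambda>n. f (- int n))"
  shows "f summable_on UNIV"
proof -
  have "f summable_on range int"
    using assms by (subst summable_on_reindex) (auto simp: o_def summable_on_UNIV_nonneg_real_iff)
  moreover have "f summable_on range (\<lambda>n. - int n)"
    using assms by (subst summable_on_reindex) (auto simp: o_def summable_on_UNIV_nonneg_real_iff inj_on_def)
  moreover have "UNIV = range int \<union> range (\<lambda>n. - int n)"
    by (auto simp: image_def) (metis int_cases2)
  ultimately show ?thesis
    by (metis summable_on_union)
qed

lemma summable_on_exp_neg_int_square:
  fixes b :: real
  assumes "b > 0"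
  shows "(\<lambda>k::int. exp (- b * (of_int k)\<^sup>2)) summable_on UNIV"
proof (rule nonneg_summable_on_int)
  have geometric: "summable (\<lambda>n. exp (- b) ^ n)"
    using assms by (intro summable_geometric) auto
  have le: "exp (- b * (real n)\<^sup>2) \<le> exp (- b) ^ n" for n :: nat
  proof -
    have "real n \<le> (real n)\<^sup>2"
      by (cases n) (auto simp: power2_eq_square)
    then show ?thesis
      using assms by (simp add: exp_of_nat_mult[symmetric] mult.commute mult_left_mono)
  qed
  show "summable (\<lambda>n. exp (- b * (of_int (int n))\<^sup>2))"
    by (rule summable_comparison_test'[OF geometric]) (use le in auto)
  show "summable (\<lambda>n. exp (- b * (of_int (- int n))\<^sup>2))"
    by (rule summable_comparison_test'[OF geometric]) (use le in auto)
qed auto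

lemma exp_neg_shifted_square_le:
  fixes b x c :: real
  assumes "b > 0"
  shows "exp (- b * (x + c)\<^sup>2) \<le> exp (b * c\<^sup>2) * exp (- (b/2) * x\<^sup>2)"
proof -
  have square_bound: "x\<^sup>2 / 2 - c\<^sup>2 \<le> (x + c)\<^sup>2"
    using zero_le_power2[of "x + 2 * c"] by (simp add: power2_eq_square algebra_simps)
  have "- b * (x + c)\<^sup>2 \<le> b * c\<^sup>2 + - (b/2) * x\<^sup>2"
    using mult_left_mono[OF square_bound, of b] assms by (simp add: algebra_simps)
  then show ?thesis
    by (simp add: exp_add[symmetric])
qed

lemma exp_neg_shifted_square_le_uniform:
  fixes b x c R :: real
  assumes "b > 0" and "\<bar>c\<bar> \<le> R"
  shows "exp (- b * (x + c)\<^sup>2) \<le> exp (b * R\<^sup>2) * exp (- (b/2) * x\<^sup>2)"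
proof -
  have "c\<^sup>2 \<le> R\<^sup>2"
    using power_mono[OF assms(2) abs_ge_zero, of 2] by simp
  then have "exp (b * c\<^sup>2) \<le> exp (b * R\<^sup>2)"
    using assms(1) by simp
  then show ?thesis
    using exp_neg_shifted_square_le[OF assms(1), of x c] by (simp add: order_trans)
qed

lemma summable_on_exp_neg_shifted_int_square:
  fixes b c :: real
  assumes "b > 0"
  shows "(\<lambda>k::int. exp (- b * (of_int k + c)\<^sup>2)) summable_on UNIV"
proof (rule summable_on_comparison_test)
  show "(\<lambda>k::int. exp (b * c\<^sup>2) * exp (- (b/2) * (of_int k)\<^sup>2)) summable_on UNIV"
    using assms by (intro summable_on_cmult_right summable_on_exp_neg_int_square) auto
qed (use exp_neg_shifted_square_le[OF assms] in auto)

lemma continuous_on_infsum_dominated: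
  fixes f :: "'i \<Rightarrow> 'a::topological_space \<Rightarrow> 'b::banach"
  assumes "\<And>i. continuous_on S (f i)" and "\<And>i x. x \<in> S \<Longrightarrow> norm (f i x) \<le> M i"
    and "M summable_on UNIV"
  shows "continuous_on S (\<lambda>x. \<Sum>\<^sub>\<infinity>i. f i x)"
proof (rule uniform_limit_theorem)
  show "uniform_limit S (\<lambda>I x. \<Sum>i\<in>I. f i x) (\<lambda>x. \<Sum>\<^sub>\<infinity>i. f i x) (finite_subsets_at_top UNIV)"
    by (rule Weierstrass_m_test_general) (use assms in auto)
  show "\<forall>\<^sub>F I in finite_subsets_at_top UNIV. continuous_on S (\<lambda>x. \<Sum>i\<in>I. f i x)"
    by (intro always_eventually allI continuous_on_sum) (use assms in auto)
qed simp

lemma infsum_nat_eq_suminf: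
  fixes g :: "nat \<Rightarrow> 'b::banach"
  assumes "g summable_on UNIV"
  shows "infsum g UNIV = suminf g"
  using has_sum_imp_sums[OF has_sum_infsum[OF assms]] by (simp add: sums_iff)

lemma integral_infsum:
  fixes f :: "'i::countable \<Rightarrow> 'a \<Rightarrow> 'b::{banach, second_countable_topology}"
  assumes "infinite (UNIV :: 'i set)"
    and integrable: "\<And>i. integrable M (f i)"
    and summable_pointwise: "\<And>x. (\<lambda>i. norm (f i x)) summable_on UNIV"
    and summable_integrals: "(\<lambda>i. \<integral>x. norm (f i x) \<partial>M) summable_on UNIV"
  shows "(\<integral>x. (\<Sum>\<^sub>\<infinity>i. f i x) \<partial>M) = (\<Sum>\<^sub>\<infinity>i. \<integral>x. f i x \<partial>M)"
proof -
  define e where "e = from_nat_into (UNIV :: 'i set)"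
  have bij: "bij_betw e UNIV UNIV"
    unfolding e_def by (rule bij_betw_from_nat_into) (use assms(1) in auto)
  have reindex: "(\<Sum>\<^sub>\<infinity>i. h i) = (\<Sum>\<^sub>\<infinity>n. h (e n))" for h :: "'i \<Rightarrow> 'b"
    using infsum_reindex_bij_betw[OF bij, of h] by simp
  have summable_reindex: "summable (\<lambda>n. h (e n))"
    if "h summable_on UNIV" for h :: "'i \<Rightarrow> real"
    using that summable_on_reindex_bij_betw[OF bij, of h] by (auto intro: summable_on_imp_summable)
  have norm_summable: "summable (\<lambda>n. norm (f (e n) x))" for x
    using summable_reindex[OF summable_pointwise] .
  have integrals_summable: "summable (\<lambda>n. \<integral>x. norm (f (e n) x) \<partial>M)"
    using summable_reindex[OF summable_integrals] .
  have "(\<integral>x. (\<Sum>\<^sub>\<infinity>i. f i x) \<partial>M) = (\<integral>x. (\<Sum>n. f (e n) x) \<partial>M)"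
    by (simp add: reindex infsum_nat_eq_suminf norm_summable_imp_summable_on[OF norm_summable])
  also have "\<dots> = (\<Sum>n. \<integral>x. f (e n) x \<partial>M)"
    by (rule integral_suminf) (use integrable norm_summable integrals_summable in auto)
  also have "\<dots> = (\<Sum>\<^sub>\<infinity>i. \<integral>x. f i x \<partial>M)"
  proof -
    have "summable (\<lambda>n. norm (\<integral>x. f (e n) x \<partial>M))"
      by (rule summable_comparison_test'[OF integrals_summable]) (auto intro: integral_norm_bound)
    then show ?thesis
      by (simp add: reindex infsum_nat_eq_suminf norm_summable_imp_summable_on)
  qed
  finally show ?thesis .
qed

lemma summable_on_product_nonneg:
  fixes f g :: "'a \<Rightarrow> real"
  assumes "\<And>s. f s \<ge> 0" "\<And>t. g t \<ge> 0" "f summable_on A" "g summable_on B"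
  shows "(\<lambda>(s,t). f s * g t) summable_on (A \<times> B)"
proof (rule summable_on_SigmaI[where g = "\<lambda>s. f s * infsum g B"])
  show "((\<lambda>t. case (s, t) of (s, t) \<Rightarrow> f s * g t) has_sum f s * infsum g B) B" for s
    using has_sum_cmult_right[OF has_sum_infsum[OF assms(4)], of "f s"] by simp
qed (use assms in \<open>auto intro: summable_on_cmult_left\<close>)

lemma infsum_product_nonneg:
  fixes f g :: "'a \<Rightarrow> real"
  assumes "\<And>s. f s \<ge> 0" "\<And>t. g t \<ge> 0" "f summable_on A" "g summable_on B"
  shows "infsum f A * infsum g B = (\<Sum>\<^sub>\<infinity>(s,t)\<in>A \<times> B. f s * g t)"
proof -
  have "(\<Sum>\<^sub>\<infinity>(s,t)\<in>A \<times> B. f s * g t) = (\<Sum>\<^sub>\<infinity>s\<in>A. \<Sum>\<^sub>\<infinity>t\<in>B. f s * g t)"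
    using infsum_Sigma_banach[of "\<lambda>(s,t). f s * g t" A "\<lambda>_. B"] summable_on_product_nonneg[OF assms]
    by simp
  also have "\<dots> = infsum f A * infsum g B"
    by (simp add: infsum_cmult_right' infsum_cmult_left')
  finally show ?thesis by simp
qed

section \<open>Continuous periodic functions are determined by their Fourier coefficients\<close>

definition fourier_coeff :: "(real \<Rightarrow> complex) \<Rightarrow> int \<Rightarrow> complex" where
  "fourier_coeff H n = (\<integral>x. H x * cis (- (2 * pi * of_int n * x)) \<partial>lebesgue_on {0..1})"

lemma integrable_unit_interval:
  fixes f :: "real \<Rightarrow> 'b::euclidean_space"
  assumes "continuous_on UNIV f"
  shows "integrable (lebesgue_on {0..1}) f"
  using assms by (intro continuous_imp_integrable_real) (auto intro: continuous_on_subset)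

inductive trig_poly :: "(real \<Rightarrow> complex) \<Rightarrow> bool" where
  zero: "trig_poly (\<lambda>_. 0)"
| add_monomial: "trig_poly f \<Longrightarrow> trig_poly (\<lambda>x. c * cis (2 * pi * of_int n * x) + f x)"

lemma trig_poly_add:
  assumes "trig_poly f" and "trig_poly g"
  shows "trig_poly (\<lambda>x. f x + g x)"
  using assms by (induction f rule: trig_poly.induct) (auto simp: add.assoc intro: trig_poly.add_monomial)

lemma trig_poly_monomial: "trig_poly (\<lambda>x. c * cis (2 * pi * of_int n * x))"
  using trig_poly.add_monomial[OF trig_poly.zero, of c n] by simp

lemma trig_poly_const: "trig_poly (\<lambda>_. c)"
  using trig_poly_monomial[of c 0] by simp

lemma trig_poly_mult_monomial:
  assumes "trig_poly f"
  shows "trig_poly (\<lambda>x. c * cis (2 * pi * of_int n * x) * f x)"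
  using assms
proof (induction f rule: trig_poly.induct)
  case zero
  then show ?case by (simp add: trig_poly.zero)
next
  case (add_monomial f d m)
  have "cis (2 * pi * of_int (n + m) * x) = cis (2 * pi * of_int n * x) * cis (2 * pi * of_int m * x)"
    for x by (simp add: cis_mult algebra_simps)
  then have "(\<lambda>x. c * cis (2 * pi * of_int n * x) * (d * cis (2 * pi * of_int m * x) + f x))
      = (\<lambda>x. c * d * cis (2 * pi * of_int (n + m) * x) + c * cis (2 * pi * of_int n * x) * f x)"
    by (simp add: algebra_simps)
  then show ?case
    using trig_poly_add[OF trig_poly_monomial[of "c * d" "n + m"] add_monomial.IH] by (simp only:)
qed

lemma trig_poly_mult:
  assumes "trig_poly f" and "trig_poly g"
  shows "trig_poly (\<lambda>x. f x * g x)"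
  using assms
proof (induction f rule: trig_poly.induct)
  case zero
  then show ?case by (simp add: trig_poly.zero)
next
  case (add_monomial f c n)
  then show ?case
    using trig_poly_add[OF trig_poly_mult_monomial[OF \<open>trig_poly g\<close>] add_monomial.IH]
    by (simp add: distrib_right)
qed

lemma continuous_on_trig_poly: "trig_poly f \<Longrightarrow> continuous_on S f"
  by (induction rule: trig_poly.induct) (auto intro!: continuous_intros)

lemma trig_poly_real_polynomial_function:
  assumes "real_polynomial_function p"
  shows "trig_poly (\<lambda>x. complex_of_real (p (cis (2 * pi * x))))"
  using assms
proof (induction p rule: real_polynomial_function.induct)
  case (linear l)
  interpret bounded_linear l by fact
  have l_eq: "l w = Re w * l 1 + Im w * l \<i>" for w
  proof -
    have "w = Re w *\<^sub>R 1 + Im w *\<^sub>R \<i>"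
      by (simp add: complex_eq_iff)
    then have "l w = l (Re w *\<^sub>R 1 + Im w *\<^sub>R \<i>)"
      by (rule arg_cong)
    then show ?thesis by (simp add: add scale)
  qed
  \<comment> \<open>\<open>a cos t + b sin t = ((a - i b)/2) e^(it) + ((a + i b)/2) e^(-it)\<close>\<close>
  have "(\<lambda>x. complex_of_real (l (cis (2 * pi * x))))
      = (\<lambda>x. (of_real (l 1) - \<i> * of_real (l \<i>)) / 2 * cis (2 * pi * of_int (1::int) * x)
             + ((of_real (l 1) + \<i> * of_real (l \<i>)) / 2 * cis (2 * pi * of_int (- 1::int) * x) + 0))"
  proof
    fix x
    have "l (cis (2 * pi * x)) = cos (2 * pi * x) * l 1 + sin (2 * pi * x) * l \<i>"
      using l_eq[of "cis (2 * pi * x)"] by simp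
    then show "complex_of_real (l (cis (2 * pi * x)))
      = (of_real (l 1) - \<i> * of_real (l \<i>)) / 2 * cis (2 * pi * of_int (1::int) * x)
        + ((of_real (l 1) + \<i> * of_real (l \<i>)) / 2 * cis (2 * pi * of_int (- 1::int) * x) + 0)"
      by (simp add: complex_eq_iff) (simp add: field_simps)
  qed
  then show ?case
    by (simp only:) (intro trig_poly.intros)
next
  case (const c)
  then show ?case by (rule trig_poly_const)
next
  case (add f g)
  then show ?case by (simp add: trig_poly_add)
next
  case (mult f g)
  then show ?case by (simp add: trig_poly_mult)
qed

lemma trig_poly_polynomial_function:
  fixes p :: "complex \<Rightarrow> complex"
  assumes "polynomial_function p"
  shows "trig_poly (\<lambda>x. p (cis (2 * pi * x)))"
proof -
  have "real_polynomial_function (\<lambda>w. Re (p w))" and "real_polynomial_function (\<lambda>w. Im (p w))"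
    using assms bounded_linear_Re bounded_linear_Im by (auto simp: polynomial_function_def o_def)
  then have "trig_poly (\<lambda>x. of_real (Re (p (cis (2 * pi * x)))) + \<i> * of_real (Im (p (cis (2 * pi * x)))))"
    by (intro trig_poly_add trig_poly_mult trig_poly_const trig_poly_real_polynomial_function)
  then show ?thesis
    by (simp only: complex_eq[symmetric])
qed

lemma periodic_shift_int:
  assumes "\<And>x. H (x + 1) = H x"
  shows "H (x + of_int k) = H x"
proof (induction k rule: int_induct[where k = 0])
  case (step1 i)
  then show ?case using assms[of "x + of_int i"] by (simp add: add.assoc)
next
  case (step2 i)
  then show ?case using assms[of "x + of_int (i - 1)"] by (simp add: add.assoc)
qed simp

lemma cis_eq_imp_int_multiple:
  assumes "cis a = cis b"
  shows "\<exists>n::int. a = b + 2 * pi * of_int n"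
proof -
  have "sin a = sin b \<and> cos a = cos b"
    using assms by (metis cis.sel)
  then show ?thesis using sin_cos_eq_iff by blast
qed

text \<open>The circle is the quotient of \<open>[0, 1]\<close> under \<open>x \<mapsto> e^(2 \<pi> i x)\<close>, so a
  continuous periodic function descends to a continuous function on it.\<close>
lemma periodic_function_lift_to_circle:
  fixes H :: "real \<Rightarrow> 'a::topological_space"
  assumes cont: "continuous_on UNIV H" and periodic: "\<And>x. H (x + 1) = H x"
  obtains g where "continuous_on (sphere 0 1) g" and "\<And>x. g (cis (2 * pi * x)) = H x"
proof -
  define g where "g w = H (Arg2pi w / (2 * pi))" for w
  define q where "q x = cis (2 * pi * x)" for x
  have cis_Arg2pi: "cis (Arg2pi w) = w" if "w \<in> sphere 0 1" for w
    using that complex_norm_eq_1_exp[of w] by (simp add: cis_conv_exp)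
  have g_q: "g (q x) = H x" for x
  proof -
    obtain k :: int where "Arg2pi (q x) = 2 * pi * x + 2 * pi * of_int k"
      using cis_eq_imp_int_multiple cis_Arg2pi[of "q x"] by (auto simp: q_def)
    then have "Arg2pi (q x) / (2 * pi) = x + of_int k"
      by (simp add: field_simps)
    then show ?thesis by (simp add: g_def periodic_shift_int[of H, OF periodic])
  qed
  have image_q: "q ` {0..1} = sphere 0 1"
  proof
    show "sphere 0 1 \<subseteq> q ` {0..1}"
    proof
      fix w :: complex
      assume w: "w \<in> sphere 0 1"
      have "w = q (Arg2pi w / (2 * pi))"
        using cis_Arg2pi[OF w] by (simp add: q_def)
      moreover have "Arg2pi w / (2 * pi) \<in> {0..1}"
        using Arg2pi[of w] by auto
      ultimately show "w \<in> q ` {0..1}"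
        by (rule image_eqI)
    qed
  qed (auto simp: q_def)
  have "quotient_map (top_of_set {0..1}) (top_of_set (sphere 0 1)) q"
  proof (rule continuous_imp_quotient_map)
    show "continuous_map (top_of_set {0..1}) (top_of_set (sphere 0 1)) q"
      using image_q unfolding q_def by (auto intro!: continuous_intros)
  qed (use image_q in \<open>simp_all add: compact_space_subtopology Hausdorff_space_subtopology\<close>)
  moreover have "continuous_map (top_of_set {0..1}) euclidean (g \<circ> q)"
    using continuous_on_subset[OF cont, of "{0..1}"] by (simp add: o_def g_q)
  ultimately have "continuous_map (top_of_set (sphere 0 1)) euclidean g"
    by (rule continuous_compose_quotient_map)
  then show ?thesis
    using that g_q by (simp add: q_def)
qed

lemma trig_poly_dense_periodic:
  fixes H :: "real \<Rightarrow> complex"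
  assumes "continuous_on UNIV H" and "\<And>x. H (x + 1) = H x" and "e > 0"
  obtains f where "trig_poly f" and "\<And>x. norm (H x - f x) < e"
proof -
  obtain g where g: "continuous_on (sphere 0 1) g" "\<And>x. g (cis (2 * pi * x)) = H x"
    using periodic_function_lift_to_circle assms(1,2) by blast
  obtain p where p: "polynomial_function p" and close: "\<forall>w\<in>sphere 0 1. norm (g w - p w) < e"
    using Stone_Weierstrass_polynomial_function[OF compact_sphere g(1) assms(3)] by blast
  have "norm (H x - p (cis (2 * pi * x))) < e" for x
  proof -
    have "cis (2 * pi * x) \<in> sphere 0 1"
      by simp
    then show ?thesis
      using close g(2)[of x] by fastforce
  qed
  then show ?thesis
    using that trig_poly_polynomial_function[OF p] by blast
qed

lemma integral_mult_trig_poly_eq_0: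
  assumes cont: "continuous_on UNIV H" and coeff: "\<And>n. fourier_coeff H n = 0"
    and "trig_poly f"
  shows "(\<integral>x. H x * f x \<partial>lebesgue_on {0..1}) = 0"
  using assms(3)
proof (induction rule: trig_poly.induct)
  case (add_monomial f c n)
  have "(\<integral>x. H x * (c * cis (2 * pi * of_int n * x) + f x) \<partial>lebesgue_on {0..1})
      = (\<integral>x. c * (H x * cis (- (2 * pi * of_int (- n) * x))) \<partial>lebesgue_on {0..1})
        + (\<integral>x. H x * f x \<partial>lebesgue_on {0..1})"
    by (subst Bochner_Integration.integral_add[symmetric])
       (auto intro!: integrable_unit_interval continuous_intros cont
          continuous_on_trig_poly[OF add_monomial.hyps] simp: algebra_simps)
  also have "\<dots> = c * fourier_coeff H (- n)"
    using add_monomial.IH by (simp add: fourier_coeff_def)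
  finally show ?case
    using coeff by simp
qed simp

lemma integral_norm_square_le_of_fourier_coeff_eq_0:
  fixes H :: "real \<Rightarrow> complex"
  assumes cont: "continuous_on UNIV H" and periodic: "\<And>x. H (x + 1) = H x"
    and coeff: "\<And>n. fourier_coeff H n = 0" and "e > 0"
  shows "(\<integral>x. (norm (H x))\<^sup>2 \<partial>lebesgue_on {0..1}) \<le> e * (\<integral>x. norm (H x) \<partial>lebesgue_on {0..1})"
proof -
  let ?M = "lebesgue_on {0..1::real}"
  \<comment> \<open>approximate \<open>cnj H\<close> by a trigonometric polynomial, which is orthogonal to \<open>H\<close>\<close>
  obtain f where f: "trig_poly f" "\<And>x. norm (cnj (H x) - f x) < e"
    using trig_poly_dense_periodic[of "\<lambda>x. cnj (H x)" e] cont periodic \<open>e > 0\<close>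
    by (auto intro: continuous_intros)
  have "complex_of_real (\<integral>x. (norm (H x))\<^sup>2 \<partial>?M) = (\<integral>x. H x * cnj (H x) \<partial>?M)"
    unfolding integral_complex_of_real[symmetric] complex_norm_square ..
  also have "\<dots> = (\<integral>x. H x * (cnj (H x) - f x) \<partial>?M) + (\<integral>x. H x * f x \<partial>?M)"
    by (subst Bochner_Integration.integral_add[symmetric])
       (auto intro!: integrable_unit_interval continuous_intros cont continuous_on_trig_poly[OF f(1)]
         simp: algebra_simps)
  also have "(\<integral>x. H x * f x \<partial>?M) = 0"
    by (rule integral_mult_trig_poly_eq_0[OF cont coeff f(1)])
  finally have I_eq: "complex_of_real (\<integral>x. (norm (H x))\<^sup>2 \<partial>?M) = (\<integral>x. H x * (cnj (H x) - f x) \<partial>?M)"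
    by simp
  have "(\<integral>x. (norm (H x))\<^sup>2 \<partial>?M) \<ge> 0"
    by (rule integral_nonneg_AE) simp
  then have "(\<integral>x. (norm (H x))\<^sup>2 \<partial>?M) = norm (complex_of_real (\<integral>x. (norm (H x))\<^sup>2 \<partial>?M))"
    by simp
  also have "\<dots> = norm (\<integral>x. H x * (cnj (H x) - f x) \<partial>?M)"
    unfolding I_eq ..
  also have "\<dots> \<le> (\<integral>x. norm (H x) * e \<partial>?M)"
  proof (rule Bochner_Integration.integral_norm_bound_integral)
    show "integrable ?M (\<lambda>x. H x * (cnj (H x) - f x))"
      by (auto intro!: integrable_unit_interval continuous_intros cont continuous_on_trig_poly[OF f(1)])
    show "integrable ?M (\<lambda>x. norm (H x) * e)"
      by (auto intro!: integrable_unit_interval continuous_intros cont)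
    show "norm (H x * (cnj (H x) - f x)) \<le> norm (H x) * e" for x
      using f(2)[of x] by (simp add: norm_mult mult_left_mono)
  qed
  also have "\<dots> = e * (\<integral>x. norm (H x) \<partial>?M)"
    by (simp add: mult.commute)
  finally show ?thesis .
qed

theorem fourier_coeff_eq_0_imp_eq_0:
  fixes H :: "real \<Rightarrow> complex"
  assumes cont: "continuous_on UNIV H" and periodic: "\<And>x. H (x + 1) = H x"
    and coeff: "\<And>n. fourier_coeff H n = 0"
  shows "H x = 0"
proof -
  let ?M = "lebesgue_on {0..1::real}"
  define A where "A = (\<integral>x. (norm (H x))\<^sup>2 \<partial>?M)"
  define B where "B = (\<integral>x. norm (H x) \<partial>?M)"
  have A_nonneg: "A \<ge> 0" and B_nonneg: "B \<ge> 0"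
    unfolding A_def B_def by (auto intro: integral_nonneg_AE)
  have "A \<le> 0"
  proof (rule field_le_epsilon)
    fix e :: real
    assume "e > 0"
    then have "e / (B + 1) > 0"
      using B_nonneg by simp
    then have "A \<le> e / (B + 1) * B"
      unfolding A_def B_def by (rule integral_norm_square_le_of_fourier_coeff_eq_0[OF cont periodic coeff])
    also have "\<dots> \<le> e"
      using \<open>e > 0\<close> B_nonneg by (simp add: field_simps)
    finally show "A \<le> 0 + e" by simp
  qed
  then have "(\<integral>x. (norm (H x))\<^sup>2 \<partial>?M) = 0"
    using A_nonneg unfolding A_def by linarith
  moreover have "continuous_on {0..1} (\<lambda>x. (norm (H x))\<^sup>2)"
    by (intro continuous_intros continuous_on_subset[OF cont]) auto
  ultimately have "\<forall>y\<in>{0..1}. (norm (H y))\<^sup>2 = 0"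
    using integralL_eq_0_iff[of 0 1 "\<lambda>x. (norm (H x))\<^sup>2"] by simp
  then have "H (frac x) = 0"
    using frac_lt_1[of x] by auto
  then show ?thesis
    using periodic_shift_int[of H, OF periodic, of "frac x" "\<lfloor>x\<rfloor>"] by (simp add: frac_def)
qed

section \<open>Poisson summation for the Gaussian\<close>

lemma integral_lebesgue_on_eq_lborel:
  fixes f :: "real \<Rightarrow> 'b::{banach, second_countable_topology}"
  assumes "f \<in> borel_measurable borel"
  shows "(\<integral>x. f x \<partial>lebesgue_on {a..b}) = (\<integral>x. indicator {a..b} x *\<^sub>R f x \<partial>lborel)"
proof -
  have "(\<integral>x. f x \<partial>lebesgue_on {a..b}) = (\<integral>x. indicator {a..b} x *\<^sub>R f x \<partial>lebesgue)"
    by (rule integral_restrict_space) auto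
  also have "\<dots> = (\<integral>x. indicator {a..b} x *\<^sub>R f x \<partial>lborel)"
    by (rule integral_completion) (use assms in auto)
  finally show ?thesis .
qed

lemma integral_cis_unit_interval:
  fixes k :: int
  shows "(\<integral>x. cis (2 * pi * of_int k * x) \<partial>lebesgue_on {0..1}) = (if k = 0 then 1 else 0)"
proof (cases "k = 0")
  case True
  then show ?thesis
    by (simp add: measure_restrict_space)
next
  case False
  define c where "c = 2 * pi * of_int k"
  have c: "c \<noteq> 0"
    using False by (simp add: c_def)
  have antiderivative: "((\<lambda>x. cis (c * x) / (\<i> * of_real c)) has_vector_derivative cis (c * x)) (at x within S)"
    for x S
  proof -
    have "((\<lambda>x. cis (c * x)) has_derivative (\<lambda>t. (c * t) *\<^sub>R (\<i> * cis (c * x)))) (at x within S)"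
      by (intro has_derivative_cis derivative_intros)
    then have "((\<lambda>x. cis (c * x)) has_vector_derivative (c *\<^sub>R (\<i> * cis (c * x)))) (at x within S)"
      unfolding has_vector_derivative_def by (simp add: algebra_simps)
    then have "((\<lambda>x. cis (c * x) / (\<i> * of_real c))
        has_vector_derivative (c *\<^sub>R (\<i> * cis (c * x))) / (\<i> * of_real c)) (at x within S)"
      by (rule has_vector_derivative_divide)
    moreover have "(c *\<^sub>R (\<i> * cis (c * x))) / (\<i> * of_real c) = cis (c * x)"
      using c by (simp add: scaleR_conv_of_real field_simps)
    ultimately show ?thesis by simp
  qed
  have "(\<integral>x. cis (c * x) \<partial>lebesgue_on {0..1}) = (\<integral>x. indicator {0..1} x *\<^sub>R cis (c * x) \<partial>lborel)"
    by (rule integral_lebesgue_on_eq_lborel) (auto intro!: borel_measurable_continuous_onI continuous_intros)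
  also have "\<dots> = cis (c * 1) / (\<i> * of_real c) - cis (c * 0) / (\<i> * of_real c)"
    by (rule integral_FTC_atLeastAtMost) (auto intro!: antiderivative continuous_intros)
  also have "cis (c * 1) = 1"
    by (simp add: c_def)
  finally show ?thesis
    using False by (simp add: c_def mult.assoc)
qed

lemma cis_int_periodic: "cis (2 * pi * of_int m * (x + of_int k)) = cis (2 * pi * of_int m * x)"
proof -
  have "cis (2 * pi * of_int m * (x + of_int k)) = cis (2 * pi * of_int m * x) * cis (2 * pi * of_int (m * k))"
    by (simp add: cis_mult algebra_simps)
  then show ?thesis by simp
qed

lemma integral_shift_unit_interval:
  fixes G :: "real \<Rightarrow> 'b::{banach, second_countable_topology}"
  assumes G: "G \<in> borel_measurable borel"
  shows "(\<integral>x. G (c + x) \<partial>lebesgue_on {0..1}) = (\<integral>y. indicator {c..<c + 1} y *\<^sub>R G y \<partial>lborel)"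
proof -
  have measurable: "(\<lambda>x. indicator A x *\<^sub>R G (c + x)) \<in> borel_measurable borel" if "A \<in> sets borel" for A
    using that G by measurable
  have "(\<integral>x. G (c + x) \<partial>lebesgue_on {0..1}) = (\<integral>x. indicator {0..1} x *\<^sub>R G (c + x) \<partial>lborel)"
    by (rule integral_lebesgue_on_eq_lborel) (use measurable[of UNIV] in simp)
  also have "\<dots> = (\<integral>x. indicator {0..<1} x *\<^sub>R G (c + x) \<partial>lborel)"
  proof (rule integral_cong_AE)
    show "AE x in lborel. indicator {0..1} x *\<^sub>R G (c + x) = indicator {0..<1} x *\<^sub>R G (c + x)"
      using AE_lborel_singleton[of 1] by eventually_elim (auto simp: indicator_def)
  qed (use measurable in auto)
  also have "\<dots> = (\<integral>y. indicator {c..<c + 1} y *\<^sub>R G y \<partial>lborel)"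
    using lborel_integral_real_affine[of 1 "\<lambda>y. indicator {c..<c + 1} y *\<^sub>R G y" c]
    by (simp add: indicator_def)
  finally show ?thesis .
qed

lemma infsum_single_support:
  fixes f :: "'a \<Rightarrow> 'b::{comm_monoid_add, t2_space}"
  assumes "\<And>k. k \<noteq> c \<Longrightarrow> f k = 0"
  shows "(\<Sum>\<^sub>\<infinity>k. f k) = f c" and "f summable_on UNIV"
  using infsum_cong_neutral[of UNIV "{c}" f f] summable_on_cong_neutral[of UNIV "{c}" f f] assms
  by auto

lemma infsum_integral_unit_intervals:
  fixes G :: "real \<Rightarrow> 'b::{banach, second_countable_topology}"
  assumes G: "integrable lborel G"
  shows "(\<Sum>\<^sub>\<infinity>k::int. \<integral>y. indicator {of_int k..<of_int k + 1} y *\<^sub>R G y \<partial>lborel) = (\<integral>y. G y \<partial>lborel)"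
proof -
  define f where "f k y = indicator {of_int k..<of_int k + 1} y *\<^sub>R G y" for k :: int and y
  have f_integrable: "integrable lborel (f k)" for k
    unfolding f_def by (intro integrable_mult_indicator G) auto
  have f_eq: "f k y = (if \<lfloor>y\<rfloor> = k then G y else 0)" for k y
    by (simp add: f_def indicator_def floor_eq_iff)
  have "(\<integral>y. (\<Sum>\<^sub>\<infinity>k. f k y) \<partial>lborel) = (\<Sum>\<^sub>\<infinity>k. \<integral>y. f k y \<partial>lborel)"
  proof (rule integral_infsum)
    show "(\<lambda>k. norm (f k y)) summable_on UNIV" for y
      by (rule infsum_single_support(2)[where c = "\<lfloor>y\<rfloor>"]) (simp add: f_eq)
    show "(\<lambda>k. \<integral>y. norm (f k y) \<partial>lborel) summable_on UNIV"
    proof (rule nonneg_bdd_above_summable_on)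
      show "bdd_above (sum (\<lambda>k. \<integral>y. norm (f k y) \<partial>lborel) ` {F. F \<subseteq> UNIV \<and> finite F})"
      proof (rule bdd_aboveI2)
        fix F :: "int set"
        assume "F \<in> {F. F \<subseteq> UNIV \<and> finite F}"
        then have "finite F" by simp
        have "(\<Sum>k\<in>F. \<integral>y. norm (f k y) \<partial>lborel) = (\<integral>y. (\<Sum>k\<in>F. norm (f k y)) \<partial>lborel)"
          by (rule Bochner_Integration.integral_sum[symmetric]) (auto intro: f_integrable)
        also have "\<dots> \<le> (\<integral>y. norm (G y) \<partial>lborel)"
        proof (rule integral_mono)
          show "(\<Sum>k\<in>F. norm (f k y)) \<le> norm (G y)" for y
            using \<open>finite F\<close> by (simp add: f_eq if_distrib sum.delta' cong: if_cong)
        qed (use G f_integrable in auto)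
        finally show "(\<Sum>k\<in>F. \<integral>y. norm (f k y) \<partial>lborel) \<le> (\<integral>y. norm (G y) \<partial>lborel)" .
      qed
    qed (auto intro: integral_nonneg_AE)
  qed (auto intro: f_integrable)
  moreover have "(\<Sum>\<^sub>\<infinity>k. f k y) = G y" for y
    by (subst infsum_single_support(1)[where c = "\<lfloor>y\<rfloor>"]) (auto simp: f_eq)
  ultimately show ?thesis
    by (simp add: f_def)
qed

lemma std_normal_fourier_transform:
  "(\<integral>x. std_normal_density x *\<^sub>R cis (s * x) \<partial>lborel) = complex_of_real (exp (- s\<^sup>2 / 2))"
proof -
  have "char std_normal_distribution s = (\<integral>x. std_normal_density x *\<^sub>R cis (s * x) \<partial>lborel)"
    unfolding char_def by (subst integral_density) (auto simp: cis_conv_exp mult.commute)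
  then show ?thesis
    by (simp add: char_std_normal_distribution)
qed

lemma gauss_fourier_transform:
  fixes a t :: real
  assumes a: "a > 0"
  shows "(\<integral>x. complex_of_real (exp (- a * x\<^sup>2)) * cis (t * x) \<partial>lborel)
    = complex_of_real (sqrt (pi / a) * exp (- t\<^sup>2 / (4 * a)))"
proof -
  \<comment> \<open>the substitution \<open>x = c y\<close> turns \<open>exp (- a x\<^sup>2)\<close> into a multiple of the standard normal density\<close>
  define c where "c = 1 / sqrt (2 * a)"
  have c: "c > 0" "c\<^sup>2 = 1 / (2 * a)"
    using a by (simp_all add: c_def power_divide)
  have "(\<integral>x. complex_of_real (exp (- a * x\<^sup>2)) * cis (t * x) \<partial>lborel)
      = c *\<^sub>R (\<integral>y. complex_of_real (exp (- a * (0 + c * y)\<^sup>2)) * cis (t * (0 + c * y)) \<partial>lborel)"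
    using lborel_integral_real_affine[of c _ 0] c by simp
  also have "(\<lambda>y. complex_of_real (exp (- a * (0 + c * y)\<^sup>2)) * cis (t * (0 + c * y)))
      = (\<lambda>y. complex_of_real (sqrt (2 * pi)) * (std_normal_density y *\<^sub>R cis ((t * c) * y)))"
  proof
    fix y
    have "a * (c * y)\<^sup>2 = y\<^sup>2 / 2"
      using a by (simp add: power_mult_distrib c)
    then show "complex_of_real (exp (- a * (0 + c * y)\<^sup>2)) * cis (t * (0 + c * y))
      = complex_of_real (sqrt (2 * pi)) * (std_normal_density y *\<^sub>R cis ((t * c) * y))"
      by (simp add: std_normal_density_def scaleR_conv_of_real mult_ac)
  qed
  also have "c *\<^sub>R (\<integral>y. complex_of_real (sqrt (2 * pi)) * (std_normal_density y *\<^sub>R cis ((t * c) * y)) \<partial>lborel)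
      = complex_of_real (c * sqrt (2 * pi) * exp (- (t * c)\<^sup>2 / 2))"
    unfolding integral_mult_right_zero std_normal_fourier_transform by (simp add: scaleR_conv_of_real)
  also have "c * sqrt (2 * pi) = sqrt (pi / a)"
    using a by (simp add: c_def real_sqrt_divide real_sqrt_mult field_simps)
  also have "exp (- (t * c)\<^sup>2 / 2) = exp (- t\<^sup>2 / (4 * a))"
    using a by (simp add: power_mult_distrib c)
  finally show ?thesis .
qed

lemma integrable_gauss_mult_cis:
  fixes a t :: real
  assumes a: "a > 0"
  shows "integrable lborel (\<lambda>x. complex_of_real (exp (- a * x\<^sup>2)) * cis (t * x))"
proof (rule Bochner_Integration.integrable_bound)
  have "(\<lambda>x. exp (- a * x\<^sup>2)) = (\<lambda>x. sqrt (pi / a) * normal_density 0 (sqrt (1 / (2 * a))) x)"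
    using a by (auto simp: normal_density_def field_simps real_sqrt_divide)
  moreover have "integrable lborel (\<lambda>x. sqrt (pi / a) * normal_density 0 (sqrt (1 / (2 * a))) x)"
    using a by (intro integrable_mult_right integrable_normal_density) simp
  ultimately show "integrable lborel (\<lambda>x. complex_of_real (exp (- a * x\<^sup>2)))"
    by (intro integrable_of_real) simp
  show "AE x in lborel. norm (complex_of_real (exp (- a * x\<^sup>2)) * cis (t * x))
    \<le> norm (complex_of_real (exp (- a * x\<^sup>2)))"
    by (simp add: norm_mult)
qed (auto intro!: borel_measurable_continuous_onI continuous_intros)

lemma infsum_of_real:
  assumes "f summable_on A"
  shows "(\<Sum>\<^sub>\<infinity>x\<in>A. of_real (f x) :: 'a::real_normed_algebra_1) = of_real (infsum f A)"
  by (rule infsumI) (rule has_sum_of_real[OF has_sum_infsum[OF assms]])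

lemma fourier_coeff_linear:
  assumes "continuous_on UNIV F" and "continuous_on UNIV G"
  shows "fourier_coeff (\<lambda>x. c * F x - G x) n = c * fourier_coeff F n - fourier_coeff G n"
  unfolding fourier_coeff_def left_diff_distrib mult.assoc
  by (subst Bochner_Integration.integral_diff)
     (auto intro!: integrable_unit_interval continuous_intros assms)

definition gauss_periodization :: "real \<Rightarrow> real \<Rightarrow> real" where
  "gauss_periodization a x = (\<Sum>\<^sub>\<infinity>k::int. exp (- a * (of_int k + x)\<^sup>2))"

definition gauss_fourier_series :: "real \<Rightarrow> real \<Rightarrow> complex" where
  "gauss_fourier_series b x = (\<Sum>\<^sub>\<infinity>m::int. of_real (exp (- b * (of_int m)\<^sup>2)) * cis (2 * pi * of_int m * x))"

lemma continuous_on_gauss_periodization: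
  assumes a: "a > 0"
  shows "continuous_on UNIV (gauss_periodization a)"
proof (rule continuous_at_imp_continuous_on, rule ballI)
  fix y :: real
  have "continuous_on (ball y 1) (gauss_periodization a)"
    unfolding gauss_periodization_def
  proof (rule continuous_on_infsum_dominated)
    show "continuous_on (ball y 1) (\<lambda>x. exp (- a * (of_int k + x)\<^sup>2))" for k
      by (intro continuous_intros)
    show "norm (exp (- a * (of_int k + x)\<^sup>2)) \<le> exp (a * (\<bar>y\<bar> + 1)\<^sup>2) * exp (- (a/2) * (of_int k)\<^sup>2)"
      if "x \<in> ball y 1" for x k
      using that exp_neg_shifted_square_le_uniform[OF a, of x "\<bar>y\<bar> + 1" "of_int k"]
      by (auto simp: dist_real_def)
    show "(\<lambda>k::int. exp (a * (\<bar>y\<bar> + 1)\<^sup>2) * exp (- (a/2) * (of_int k)\<^sup>2)) summable_on UNIV"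
      using a by (intro summable_on_cmult_right summable_on_exp_neg_int_square) auto
  qed
  then show "isCont (gauss_periodization a) y"
    using continuous_on_interior by fastforce
qed

lemma continuous_on_gauss_fourier_series:
  assumes "b > 0"
  shows "continuous_on UNIV (gauss_fourier_series b)"
  unfolding gauss_fourier_series_def
proof (rule continuous_on_infsum_dominated)
  show "(\<lambda>m::int. exp (- b * (of_int m)\<^sup>2)) summable_on UNIV"
    using assms by (rule summable_on_exp_neg_int_square)
qed (auto intro!: continuous_intros simp: norm_mult)

lemma gauss_periodization_periodic: "gauss_periodization a (x + 1) = gauss_periodization a x"
proof -
  have "bij_betw (\<lambda>k::int. k + 1) UNIV UNIV"
    by (rule bij_betwI[of _ _ _ "\<lambda>k. k - 1"]) auto
  from infsum_reindex_bij_betw[OF this, of "\<lambda>k. exp (- a * (of_int k + x)\<^sup>2)"]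
  show ?thesis
    by (simp add: gauss_periodization_def add_ac)
qed

lemma gauss_fourier_series_periodic: "gauss_fourier_series b (x + 1) = gauss_fourier_series b x"
  using cis_int_periodic[of _ x 1] by (simp add: gauss_fourier_series_def)

lemma fourier_coeff_gauss_fourier_series:
  assumes b: "b > 0"
  shows "fourier_coeff (gauss_fourier_series b) n = of_real (exp (- b * (of_int n)\<^sup>2))"
proof -
  define f where "f m x = of_real (exp (- b * (of_int m)\<^sup>2)) * cis (2 * pi * of_int (m - n) * x)"
    for m :: int and x :: real
  have "gauss_fourier_series b x * cis (- (2 * pi * of_int n * x)) = (\<Sum>\<^sub>\<infinity>m. f m x)" for x
    unfolding gauss_fourier_series_def infsum_cmult_left'[symmetric]
    by (rule infsum_cong) (simp add: f_def cis_mult algebra_simps)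
  then have "fourier_coeff (gauss_fourier_series b) n
      = (\<integral>x. (\<Sum>\<^sub>\<infinity>m. f m x) \<partial>lebesgue_on {0..1})"
    by (simp add: fourier_coeff_def)
  also have "\<dots> = (\<Sum>\<^sub>\<infinity>m. \<integral>x. f m x \<partial>lebesgue_on {0..1})"
    by (rule integral_infsum)
       (use summable_on_exp_neg_int_square[OF b] in
         \<open>auto simp: f_def norm_mult measure_restrict_space intro!: integrable_unit_interval continuous_intros\<close>)
  also have "\<dots> = (\<Sum>\<^sub>\<infinity>m. if m = n then of_real (exp (- b * (of_int m)\<^sup>2)) else 0)"
    by (rule infsum_cong) (simp only: f_def integral_mult_right_zero integral_cis_unit_interval; simp)
  also have "\<dots> = of_real (exp (- b * (of_int n)\<^sup>2))"
    by (subst infsum_single_support(1)[where c = n]) auto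
  finally show ?thesis .
qed

lemma summable_on_integral_exp_neg_shifted_square:
  assumes a: "a > 0"
  shows "(\<lambda>k::int. \<integral>x. exp (- a * (of_int k + x)\<^sup>2) \<partial>lebesgue_on {0..1::real}) summable_on UNIV"
proof (rule summable_on_comparison_test)
  show "(\<lambda>k::int. exp a * exp (- (a/2) * (of_int k)\<^sup>2)) summable_on UNIV"
    using a by (intro summable_on_cmult_right summable_on_exp_neg_int_square) auto
  show "(\<integral>x. exp (- a * (of_int k + x)\<^sup>2) \<partial>lebesgue_on {0..1}) \<le> exp a * exp (- (a/2) * (of_int k)\<^sup>2)"
    for k :: int
    using integral_mono[of "lebesgue_on {0..1}" "\<lambda>x. exp (- a * (of_int k + x)\<^sup>2)"
        "\<lambda>_. exp a * exp (- (a/2) * (of_int k)\<^sup>2)"]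
      exp_neg_shifted_square_le_uniform[OF a, of _ 1 "of_int k"]
    by (simp add: measure_restrict_space integrable_unit_interval continuous_intros)
qed (auto intro: integral_nonneg_AE)

lemma fourier_coeff_gauss_periodization:
  assumes a: "a > 0"
  shows "fourier_coeff (\<lambda>x. of_real (gauss_periodization a x)) n
    = of_real (sqrt (pi / a) * exp (- (pi * of_int n)\<^sup>2 / a))"
proof -
  define G where "G y = of_real (exp (- a * y\<^sup>2)) * cis (- (2 * pi * of_int n) * y)" for y
  define f where "f k x = G (of_int k + x)" for k :: int and x
  have f_eq: "f k x = of_real (exp (- a * (of_int k + x)\<^sup>2)) * cis (- (2 * pi * of_int n * x))" for k x
    using cis_int_periodic[of "- n" x k] by (simp add: f_def G_def add.commute)
  have G_integrable: "integrable lborel G"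
    unfolding G_def by (rule integrable_gauss_mult_cis[OF a])
  have "of_real (gauss_periodization a x) * cis (- (2 * pi * of_int n * x)) = (\<Sum>\<^sub>\<infinity>k. f k x)" for x
  proof -
    have "of_real (gauss_periodization a x) = (\<Sum>\<^sub>\<infinity>k. of_real (exp (- a * (of_int k + x)\<^sup>2)) :: complex)"
      unfolding gauss_periodization_def
      by (rule infsum_of_real[OF summable_on_exp_neg_shifted_int_square[OF a], symmetric])
    then show ?thesis
      unfolding f_eq infsum_cmult_left' by simp
  qed
  then have "fourier_coeff (\<lambda>x. of_real (gauss_periodization a x)) n
      = (\<integral>x. (\<Sum>\<^sub>\<infinity>k. f k x) \<partial>lebesgue_on {0..1})"
    by (simp add: fourier_coeff_def)
  also have "\<dots> = (\<Sum>\<^sub>\<infinity>k. \<integral>x. f k x \<partial>lebesgue_on {0..1})"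
  proof (rule integral_infsum)
    show "integrable (lebesgue_on {0..1}) (f k)" for k
      unfolding f_eq by (intro integrable_unit_interval continuous_intros)
    show "(\<lambda>k. norm (f k x)) summable_on UNIV" for x
      using summable_on_exp_neg_shifted_int_square[OF a, of x] by (simp add: f_eq norm_mult)
    show "(\<lambda>k. \<integral>x. norm (f k x) \<partial>lebesgue_on {0..1}) summable_on UNIV"
      using summable_on_integral_exp_neg_shifted_square[OF a] by (simp add: f_eq norm_mult)
  qed (simp add: infinite_UNIV_int)
  also have "\<dots> = (\<Sum>\<^sub>\<infinity>k::int. \<integral>y. indicator {of_int k..<of_int k + 1} y *\<^sub>R G y \<partial>lborel)"
    unfolding f_def
    by (subst integral_shift_unit_interval) (auto simp: G_def intro!: borel_measurable_continuous_onI continuous_intros)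
  also have "\<dots> = (\<integral>y. G y \<partial>lborel)"
    by (rule infsum_integral_unit_intervals[OF G_integrable])
  also have "\<dots> = of_real (sqrt (pi / a) * exp (- (pi * of_int n)\<^sup>2 / a))"
    unfolding G_def gauss_fourier_transform[OF a] by (simp add: power_mult_distrib)
  finally show ?thesis .
qed

theorem poisson_summation_gauss:
  assumes b: "b > 0"
  shows "gauss_fourier_series b x = of_real (sqrt (pi / b) * gauss_periodization (pi\<^sup>2 / b) x)"
proof -
  define a where "a = pi\<^sup>2 / b"
  have a: "a > 0"
    using b by (simp add: a_def)
  define H where "H y = of_real (sqrt (pi / b)) * of_real (gauss_periodization a y) - gauss_fourier_series b y" for y
  have continuous: "continuous_on UNIV (\<lambda>y. complex_of_real (gauss_periodization a y))"
    by (intro continuous_intros continuous_on_gauss_periodization[OF a])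
  have "H y = 0" for y
  proof (rule fourier_coeff_eq_0_imp_eq_0)
    show "continuous_on UNIV H"
      unfolding H_def by (intro continuous_intros continuous continuous_on_gauss_fourier_series[OF b])
    show "H (x + 1) = H x" for x
      by (simp add: H_def gauss_periodization_periodic gauss_fourier_series_periodic)
    show "fourier_coeff H n = 0" for n
    proof -
      have "fourier_coeff H n = of_real (sqrt (pi / b)) * of_real (sqrt (pi / a) * exp (- (pi * of_int n)\<^sup>2 / a))
          - of_real (exp (- b * (of_int n)\<^sup>2))"
        unfolding H_def fourier_coeff_linear[OF continuous continuous_on_gauss_fourier_series[OF b]]
          fourier_coeff_gauss_periodization[OF a] fourier_coeff_gauss_fourier_series[OF b] ..
      moreover have "sqrt (pi / b) * sqrt (pi / a) = 1"
        using b by (simp add: a_def real_sqrt_mult[symmetric] power2_eq_square)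
      moreover have "(pi * of_int n)\<^sup>2 / a = b * (of_int n)\<^sup>2"
        using b by (simp add: a_def power_mult_distrib)
      ultimately show ?thesis
        by (simp add: mult.assoc[symmetric] flip: of_real_mult)
    qed
  qed
  then show ?thesis
    by (simp add: H_def a_def)
qed

section \<open>Overlaps of Gaussian combs\<close>

lemma gauss_pos: "v > 0 \<Longrightarrow> gauss v x > 0"
  by (simp add: gauss_def)

lemma gauss_le: "v > 0 \<Longrightarrow> gauss v x \<le> 1 / sqrt (2 * pi * v)"
  by (simp add: gauss_def divide_right_mono)

lemma gauss_mult_gauss:
  assumes v: "v > 0"
  shows "gauss v (q - x) * gauss v (q - y) = gauss (2 * v) (x - y) * normal_density ((x + y) / 2) (sqrt (v / 2)) q"
proof -
  have exps: "exp (- (q - x)\<^sup>2 / (2 * v)) * exp (- (q - y)\<^sup>2 / (2 * v))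
      = exp (- (x - y)\<^sup>2 / (2 * (2 * v))) * exp (- (q - (x + y) / 2)\<^sup>2 / (2 * (sqrt (v / 2))\<^sup>2))"
    using v by (simp add: exp_add[symmetric] field_simps power2_eq_square)
  have "sqrt (2 * pi * (2 * v)) * sqrt (2 * pi * (sqrt (v / 2))\<^sup>2) = sqrt ((2 * pi * v)\<^sup>2)"
    using v by (simp add: real_sqrt_mult[symmetric] power2_eq_square algebra_simps)
  then have norms: "sqrt (2 * pi * v) * sqrt (2 * pi * v) = sqrt (2 * pi * (2 * v)) * sqrt (2 * pi * (sqrt (v / 2))\<^sup>2)"
    using v by simp
  have "gauss v (q - x) * gauss v (q - y)
      = (exp (- (q - x)\<^sup>2 / (2 * v)) * exp (- (q - y)\<^sup>2 / (2 * v))) / (sqrt (2 * pi * v) * sqrt (2 * pi * v))"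
    by (simp add: gauss_def)
  also have "\<dots> = (exp (- (x - y)\<^sup>2 / (2 * (2 * v))) * exp (- (q - (x + y) / 2)\<^sup>2 / (2 * (sqrt (v / 2))\<^sup>2)))
      / (sqrt (2 * pi * (2 * v)) * sqrt (2 * pi * (sqrt (v / 2))\<^sup>2))"
    by (simp only: exps norms)
  also have "\<dots> = gauss (2 * v) (x - y) * normal_density ((x + y) / 2) (sqrt (v / 2)) q"
    by (simp add: gauss_def normal_density_def)
  finally show ?thesis .
qed

lemma integrable_gauss_mult_gauss: "v > 0 \<Longrightarrow> integrable lborel (\<lambda>q. gauss v (q - x) * gauss v (q - y))"
  by (simp add: gauss_mult_gauss)

lemma integral_gauss_mult_gauss:
  "v > 0 \<Longrightarrow> (\<integral>q. gauss v (q - x) * gauss v (q - y) \<partial>lborel) = gauss (2 * v) (x - y)"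
  by (simp add: gauss_mult_gauss)

definition comb_weight :: "real \<Rightarrow> real \<Rightarrow> real \<Rightarrow> int \<Rightarrow> real" where
  "comb_weight \<mu> \<Gamma> a s = exp (- ((of_int s + a) * \<Gamma>)\<^sup>2 / (2 * \<mu>))"

lemma comb_conv_gauss_eq:
  "comb_conv_gauss \<mu> \<Gamma> a v q = (\<Sum>\<^sub>\<infinity>s. comb_weight \<mu> \<Gamma> a s * gauss v (q - (of_int s + a) * \<Gamma>))"
  by (simp add: comb_conv_gauss_def comb_weight_def)

lemma comb_weight_pos: "comb_weight \<mu> \<Gamma> a s > 0"
  by (simp add: comb_weight_def)

lemma summable_on_comb_weight:
  assumes "\<mu> > 0" and "\<Gamma> \<noteq> 0"
  shows "comb_weight \<mu> \<Gamma> a summable_on UNIV"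
proof -
  have "(\<lambda>s::int. exp (- (\<Gamma>\<^sup>2 / (2 * \<mu>)) * (of_int s + a)\<^sup>2)) summable_on UNIV"
    using assms by (intro summable_on_exp_neg_shifted_int_square) simp
  moreover have "(\<lambda>s. exp (- (\<Gamma>\<^sup>2 / (2 * \<mu>)) * (of_int s + a)\<^sup>2)) = comb_weight \<mu> \<Gamma> a"
    by (rule ext) (simp add: comb_weight_def power_mult_distrib mult.commute)
  ultimately show ?thesis
    by simp
qed

lemma summable_on_comb_terms:
  assumes "\<mu> > 0" and "\<Gamma> \<noteq> 0" and "v > 0"
  shows "(\<lambda>s. comb_weight \<mu> \<Gamma> a s * gauss v (q - (of_int s + a) * \<Gamma>)) summable_on UNIV"
proof (rule summable_on_comparison_test)
  show "(\<lambda>s. comb_weight \<mu> \<Gamma> a s * (1 / sqrt (2 * pi * v))) summable_on UNIV"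
    using assms by (intro summable_on_cmult_left summable_on_comb_weight)
  show "comb_weight \<mu> \<Gamma> a s * gauss v (q - (of_int s + a) * \<Gamma>) \<le> comb_weight \<mu> \<Gamma> a s * (1 / sqrt (2 * pi * v))"
    for s
    by (rule mult_left_mono) (use assms gauss_le comb_weight_pos in \<open>auto intro: less_imp_le\<close>)
  show "0 \<le> comb_weight \<mu> \<Gamma> a s * gauss v (q - (of_int s + a) * \<Gamma>)" for s
    using assms gauss_pos comb_weight_pos by (auto intro: less_imp_le)
qed

lemma summable_on_comb_overlap_terms:
  assumes "\<mu> > 0" and "\<Gamma> \<noteq> 0" and "v > 0"
  shows "(\<lambda>(s, t). comb_weight \<mu> \<Gamma> a s * comb_weight \<mu> \<Gamma> b t
      * gauss v ((of_int s + a) * \<Gamma> - (of_int t + b) * \<Gamma>)) summable_on UNIV"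
proof (rule summable_on_comparison_test)
  have "(\<lambda>p. comb_weight \<mu> \<Gamma> a (fst p) * comb_weight \<mu> \<Gamma> b (snd p)) summable_on UNIV"
    using summable_on_product_nonneg[of "comb_weight \<mu> \<Gamma> a" "comb_weight \<mu> \<Gamma> b" UNIV UNIV]
      summable_on_comb_weight[OF assms(1,2)] comb_weight_pos
    by (simp add: case_prod_unfold less_imp_le)
  then show "(\<lambda>(s, t). comb_weight \<mu> \<Gamma> a s * comb_weight \<mu> \<Gamma> b t * (1 / sqrt (2 * pi * v))) summable_on UNIV"
    unfolding case_prod_unfold by (rule summable_on_cmult_left)
  show "(case p of (s, t) \<Rightarrow> comb_weight \<mu> \<Gamma> a s * comb_weight \<mu> \<Gamma> b t
      * gauss v ((of_int s + a) * \<Gamma> - (of_int t + b) * \<Gamma>))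
    \<le> (case p of (s, t) \<Rightarrow> comb_weight \<mu> \<Gamma> a s * comb_weight \<mu> \<Gamma> b t * (1 / sqrt (2 * pi * v)))" for p
  proof (cases p)
    case (Pair s t)
    have "comb_weight \<mu> \<Gamma> a s * comb_weight \<mu> \<Gamma> b t * gauss v ((of_int s + a) * \<Gamma> - (of_int t + b) * \<Gamma>)
      \<le> comb_weight \<mu> \<Gamma> a s * comb_weight \<mu> \<Gamma> b t * (1 / sqrt (2 * pi * v))"
      by (rule mult_left_mono) (use assms gauss_le less_imp_le[OF comb_weight_pos] in auto)
    then show ?thesis
      by (simp add: Pair)
  qed
  show "0 \<le> (case p of (s, t) \<Rightarrow> comb_weight \<mu> \<Gamma> a s * comb_weight \<mu> \<Gamma> b t
      * gauss v ((of_int s + a) * \<Gamma> - (of_int t + b) * \<Gamma>))" for p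
    using assms gauss_pos comb_weight_pos by (auto intro!: mult_nonneg_nonneg less_imp_le split: prod.split)
qed

lemma comb_conv_gauss_mult_eq_infsum:
  fixes \<mu> \<Gamma> a b v q :: real
  assumes \<mu>: "\<mu> > 0" and \<Gamma>: "\<Gamma> \<noteq> 0" and v: "v > 0"
  defines "T \<equiv> \<lambda>(s, t). comb_weight \<mu> \<Gamma> a s * comb_weight \<mu> \<Gamma> b t
      * (gauss v (q - (of_int s + a) * \<Gamma>) * gauss v (q - (of_int t + b) * \<Gamma>))"
  shows "comb_conv_gauss \<mu> \<Gamma> a v q * comb_conv_gauss \<mu> \<Gamma> b v q = (\<Sum>\<^sub>\<infinity>p. T p)"
    and "T summable_on UNIV"
proof -
  define A where "A s = comb_weight \<mu> \<Gamma> a s * gauss v (q - (of_int s + a) * \<Gamma>)" for s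
  define B where "B t = comb_weight \<mu> \<Gamma> b t * gauss v (q - (of_int t + b) * \<Gamma>)" for t
  have nonneg: "A s \<ge> 0" "B t \<ge> 0" for s t
    using comb_weight_pos gauss_pos[OF v] by (auto simp: A_def B_def less_imp_le)
  have summable: "A summable_on UNIV" "B summable_on UNIV"
    unfolding A_def B_def using summable_on_comb_terms[OF \<mu> \<Gamma> v] by auto
  have T_eq: "T = (\<lambda>(s, t). A s * B t)"
    by (auto simp: T_def A_def B_def mult_ac)
  show "comb_conv_gauss \<mu> \<Gamma> a v q * comb_conv_gauss \<mu> \<Gamma> b v q = (\<Sum>\<^sub>\<infinity>p. T p)"
    unfolding comb_conv_gauss_eq A_def[symmetric] B_def[symmetric] T_eq
    using infsum_product_nonneg[OF nonneg summable] by simp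
  show "T summable_on UNIV"
    unfolding T_eq using summable_on_product_nonneg[OF nonneg summable] by simp
qed

lemma integral_comb_conv_gauss_mult:
  assumes \<mu>: "\<mu> > 0" and \<Gamma>: "\<Gamma> \<noteq> 0" and v: "v > 0"
  shows "(\<integral>q. comb_conv_gauss \<mu> \<Gamma> a v q * comb_conv_gauss \<mu> \<Gamma> b v q \<partial>lborel)
    = (\<Sum>\<^sub>\<infinity>(s, t). comb_weight \<mu> \<Gamma> a s * comb_weight \<mu> \<Gamma> b t
        * gauss (2 * v) ((of_int s + a) * \<Gamma> - (of_int t + b) * \<Gamma>))"
proof -
  define h where "h p q = comb_weight \<mu> \<Gamma> a (fst p) * comb_weight \<mu> \<Gamma> b (snd p)
      * (gauss v (q - (of_int (fst p) + a) * \<Gamma>) * gauss v (q - (of_int (snd p) + b) * \<Gamma>))"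
    for p :: "int \<times> int" and q
  note expansion = comb_conv_gauss_mult_eq_infsum[OF \<mu> \<Gamma> v, where a = a and b = b]
  have h_nonneg: "h p q \<ge> 0" for p q
    using comb_weight_pos gauss_pos[OF v] by (auto simp: h_def less_imp_le)
  have h_integral: "(\<integral>q. h p q \<partial>lborel) = comb_weight \<mu> \<Gamma> a (fst p) * comb_weight \<mu> \<Gamma> b (snd p)
      * gauss (2 * v) ((of_int (fst p) + a) * \<Gamma> - (of_int (snd p) + b) * \<Gamma>)" for p
    unfolding h_def integral_mult_right_zero integral_gauss_mult_gauss[OF v] ..
  have "(\<integral>q. comb_conv_gauss \<mu> \<Gamma> a v q * comb_conv_gauss \<mu> \<Gamma> b v q \<partial>lborel)
      = (\<integral>q. (\<Sum>\<^sub>\<infinity>p. h p q) \<partial>lborel)"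
    using expansion(1) by (simp add: h_def case_prod_unfold)
  also have "\<dots> = (\<Sum>\<^sub>\<infinity>p. \<integral>q. h p q \<partial>lborel)"
  proof (rule integral_infsum)
    show "integrable lborel (h p)" for p
      unfolding h_def by (intro integrable_mult_right integrable_gauss_mult_gauss v)
    show "(\<lambda>p. norm (h p q)) summable_on UNIV" for q
      using expansion(2) h_nonneg by (simp add: h_def case_prod_unfold)
    show "(\<lambda>p. \<integral>q. norm (h p q) \<partial>lborel) summable_on UNIV"
      using summable_on_comb_overlap_terms[OF \<mu> \<Gamma>, of "2 * v" a b] v h_nonneg
      by (simp add: case_prod_unfold h_integral)
  qed (auto simp: infinite_UNIV_char_0 finite_prod)
  finally show ?thesis
    by (simp add: case_prod_unfold h_integral)
qed

section \<open>The genus-two theta series with a diagonal imaginary period matrix\<close>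

lemma bij_betw_int_pair_lattice:
  "bij_betw (\<lambda>(n, m) i. if i = 0 then n else if i = 1 then m else 0) UNIV {s :: nat \<Rightarrow> int. \<forall>i\<ge>2. s i = 0}"
proof (rule bij_betwI[where g = "\<lambda>s. (s 0, s 1)"])
  show "(\<lambda>(n, m) i. if i = 0 then n else if i = 1 then m else 0) (s 0, s 1) = s"
    if "s \<in> {s :: nat \<Rightarrow> int. \<forall>i\<ge>2. s i = 0}" for s
  proof
    fix i :: nat
    show "(\<lambda>(n, m) i. if i = 0 then n else if i = 1 then m else 0) (s 0, s 1) i = s i"
      using that by (cases "i = 0"; cases "i = 1") auto
  qed
qed auto

lemma complex_of_rat_eq_of_real: "(of_rat r :: complex) = of_real (of_rat r)"
  by (cases r) (simp add: of_rat_rat)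

lemma riemann_theta_diag_eq_double_sum:
  fixes ra rb :: real and A B :: rat
  shows "riemann_theta 2 (\<lambda>k. if k = 0 then A else 0) (\<lambda>k. if k = 1 then B else 0) (\<lambda>_. 0)
      (\<lambda>k l. if k = 0 \<and> l = 0 then \<i> * of_real ra else if k = 1 \<and> l = 1 then \<i> * of_real rb else - 1/2)
    = (\<Sum>\<^sub>\<infinity>(n, m)\<in>(UNIV :: (int \<times> int) set). of_real (exp (- (pi * ra) * (of_int n + of_rat A)\<^sup>2))
        * (of_real (exp (- (pi * rb) * (of_int m)\<^sup>2)) * cis (2 * pi * of_int m * (of_rat B - (of_int n + of_rat A) / 2))))"
    (is "_ = (\<Sum>\<^sub>\<infinity>(n, m). ?term n m)")
proof -
  let ?\<tau> = "\<lambda>k l. if k = 0 \<and> l = 0 then \<i> * complex_of_real ra else if k = 1 \<and> l = 1 then \<i> * of_real rb else - 1/2"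
  let ?a = "\<lambda>k::nat. if k = 0 then A else 0" and ?b = "\<lambda>k::nat. if k = 1 then B else 0"
  have "riemann_theta 2 ?a ?b (\<lambda>_. 0) ?\<tau>
      = (\<Sum>\<^sub>\<infinity>p. exp (of_real (- (pi * ra) * (of_int (fst p) + of_rat A)\<^sup>2 + - (pi * rb) * (of_int (snd p))\<^sup>2)
          + \<i> * of_real (2 * pi * of_int (snd p) * (of_rat B - (of_int (fst p) + of_rat A) / 2))))"
    unfolding riemann_theta_def infsum_reindex_bij_betw[OF bij_betw_int_pair_lattice, symmetric]
    by (rule infsum_cong, rule arg_cong[where f = exp])
       (simp add: case_prod_unfold numeral_2_eq_2 complex_eq_iff complex_of_rat_eq_of_real
         power2_eq_square algebra_simps)
  also have "\<dots> = (\<Sum>\<^sub>\<infinity>(n, m). ?term n m)"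
  proof (rule infsum_cong)
    have exp_eq: "exp (of_real u + \<i> * of_real w) = of_real (exp u) * cis w" for u w
      by (simp add: exp_add cis_conv_exp exp_of_real)
    show "exp (of_real (- (pi * ra) * (of_int (fst p) + of_rat A)\<^sup>2 + - (pi * rb) * (of_int (snd p))\<^sup>2)
          + \<i> * of_real (2 * pi * of_int (snd p) * (of_rat B - (of_int (fst p) + of_rat A) / 2)))
      = (case p of (n, m) \<Rightarrow> ?term n m)" for p
      by (simp only: exp_eq case_prod_unfold) (simp only: exp_add of_real_mult mult.assoc)
  qed
  finally show ?thesis .
qed

lemma summable_on_product_mult_cis:
  fixes e g :: "'a \<Rightarrow> real" and \<theta> :: "'a \<times> 'a \<Rightarrow> real"
  assumes "\<And>n. e n \<ge> 0" "\<And>m. g m \<ge> 0" "e summable_on UNIV" "g summable_on UNIV"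
  shows "(\<lambda>p. of_real (e (fst p)) * (of_real (g (snd p)) * cis (\<theta> p))) summable_on UNIV"
proof (rule abs_summable_summable)
  have "(\<lambda>(n, m). e n * g m) summable_on UNIV \<times> UNIV"
    by (rule summable_on_product_nonneg[OF assms])
  then show "(\<lambda>p. norm (of_real (e (fst p)) * (of_real (g (snd p)) * cis (\<theta> p)))) summable_on UNIV"
    using assms(1,2) by (simp add: norm_mult case_prod_unfold)
qed

lemma gauss_fourier_series_eq_periodization:
  assumes "rb > 0"
  shows "gauss_fourier_series (pi * rb) x = of_real (sqrt (1 / rb) * gauss_periodization (pi / rb) x)"
  using poisson_summation_gauss[of "pi * rb" x] assms by (simp add: power2_eq_square)

lemma riemann_theta_diag_eq_periodization_sum:
  fixes ra rb :: real and A B :: rat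
  assumes ra: "ra > 0" and rb: "rb > 0"
  shows "riemann_theta 2 (\<lambda>k. if k = 0 then A else 0) (\<lambda>k. if k = 1 then B else 0) (\<lambda>_. 0)
      (\<lambda>k l. if k = 0 \<and> l = 0 then \<i> * of_real ra else if k = 1 \<and> l = 1 then \<i> * of_real rb else - 1/2)
    = of_real (sqrt (1 / rb) * (\<Sum>\<^sub>\<infinity>n::int. exp (- (pi * ra) * (of_int n + of_rat A)\<^sup>2)
        * gauss_periodization (pi / rb) (of_rat B - (of_int n + of_rat A) / 2)))"
proof -
  define e where "e n = exp (- (pi * ra) * (of_int n + of_rat A)\<^sup>2)" for n :: int
  define g where "g m = exp (- (pi * rb) * (of_int m)\<^sup>2)" for m :: int
  define x :: "int \<Rightarrow> real" where "x n = of_rat B - (of_int n + of_rat A) / 2" for n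
  define F where "F p = of_real (e (fst p)) * (of_real (g (snd p)) * cis (2 * pi * of_int (snd p) * x (fst p)))"
    for p :: "int \<times> int"
  define h where "h n = sqrt (1 / rb) * (e n * gauss_periodization (pi / rb) (x n))" for n
  have e_summable: "e summable_on UNIV"
    unfolding e_def using ra by (intro summable_on_exp_neg_shifted_int_square) simp
  have g_summable: "g summable_on UNIV"
    unfolding g_def using rb by (intro summable_on_exp_neg_int_square) simp
  have F_summable: "F summable_on UNIV"
    unfolding F_def by (rule summable_on_product_mult_cis[OF _ _ e_summable g_summable]) (simp_all add: e_def g_def)
  have inner: "(\<Sum>\<^sub>\<infinity>m. F (n, m)) = of_real (h n)" for n
    using gauss_fourier_series_eq_periodization[OF rb, of "x n"]
    by (simp add: F_def gauss_fourier_series_def g_def h_def infsum_cmult_right')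
  have "(\<lambda>m. F (n, m)) summable_on UNIV" for n
    using summable_on_SigmaD1[of "\<lambda>n m. F (n, m)" UNIV "\<lambda>_. UNIV" n] F_summable by simp
  then have "(\<lambda>n. \<Sum>\<^sub>\<infinity>m. F (n, m)) summable_on UNIV"
    using summable_on_SigmaD[of F UNIV "\<lambda>_. UNIV"] F_summable by simp
  then have "(\<lambda>n. Re (of_real (h n))) summable_on UNIV"
    unfolding inner by (rule summable_on_bounded_linear[OF bounded_linear_Re])
  then have h_summable: "h summable_on UNIV"
    by simp
  have "riemann_theta 2 (\<lambda>k. if k = 0 then A else 0) (\<lambda>k. if k = 1 then B else 0) (\<lambda>_. 0)
      (\<lambda>k l. if k = 0 \<and> l = 0 then \<i> * of_real ra else if k = 1 \<and> l = 1 then \<i> * of_real rb else - 1/2)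
    = (\<Sum>\<^sub>\<infinity>p\<in>UNIV \<times> UNIV. F p)"
    unfolding riemann_theta_diag_eq_double_sum by (simp add: F_def e_def g_def x_def case_prod_unfold)
  also have "\<dots> = (\<Sum>\<^sub>\<infinity>n. \<Sum>\<^sub>\<infinity>m. F (n, m))"
    using infsum_Sigma_banach[of F UNIV "\<lambda>_. UNIV"] F_summable by simp
  also have "\<dots> = of_real (\<Sum>\<^sub>\<infinity>n. h n)"
    unfolding inner by (rule infsum_of_real[OF h_summable])
  also have "(\<Sum>\<^sub>\<infinity>n. h n) = sqrt (1 / rb) * (\<Sum>\<^sub>\<infinity>n. e n * gauss_periodization (pi / rb) (x n))"
    by (simp add: h_def infsum_cmult_right')
  finally show ?thesis
    by (simp add: e_def x_def)
qed

definition gkp_comb :: "real \<Rightarrow> real \<Rightarrow> real \<Rightarrow> real \<Rightarrow> real \<Rightarrow> real" where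
  "gkp_comb sq sp \<Gamma> \<alpha> = comb_conv_gauss (gkp_Lambda sq sp / (2 * sp)) \<Gamma> \<alpha> (2 * sq)"

definition gkp_tau :: "real \<Rightarrow> real \<Rightarrow> real \<Rightarrow> nat \<Rightarrow> nat \<Rightarrow> complex" where
  "gkp_tau sq sp \<Gamma> = (\<lambda>k l.
     if k = 0 \<and> l = 0 then \<i> * complex_of_real (sp * \<Gamma>\<^sup>2 / (2 * pi * gkp_Lambda sq sp))
     else if k = 1 \<and> l = 1 then \<i> * complex_of_real (2 * pi * sq * gkp_Lambda sq sp / \<Gamma>\<^sup>2)
     else - 1/2)"

lemma gkp_exponent_identity:
  fixes sq sp X Y :: real
  assumes sq: "sq > 0" and sp: "sp > 0" and \<Gamma>: "\<Gamma> \<noteq> 0" and \<Lambda>: "gkp_Lambda sq sp > 0"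
  defines "\<Lambda> \<equiv> gkp_Lambda sq sp"
  shows "- (pi * (sp * \<Gamma>\<^sup>2 / (2 * pi * \<Lambda>))) * ((X + Y) / \<Gamma>)\<^sup>2
      + - (pi / (2 * pi * sq * \<Lambda> / \<Gamma>\<^sup>2)) * ((Y - X) / (2 * \<Gamma>))\<^sup>2
    = - X\<^sup>2 / (2 * (\<Lambda> / (2 * sp))) + - Y\<^sup>2 / (2 * (\<Lambda> / (2 * sp))) + - (X - Y)\<^sup>2 / (2 * (2 * (2 * sq)))"
proof -
  have "- (pi * (sp * \<Gamma>\<^sup>2 / (2 * pi * \<Lambda>))) * ((X + Y) / \<Gamma>)\<^sup>2
      + - (pi / (2 * pi * sq * \<Lambda> / \<Gamma>\<^sup>2)) * ((Y - X) / (2 * \<Gamma>))\<^sup>2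
    = - sp * (X + Y)\<^sup>2 / (2 * \<Lambda>) - (X - Y)\<^sup>2 / (8 * sq * \<Lambda>)"
    using \<Gamma> \<Lambda> sq by (simp add: \<Lambda>_def field_simps power2_eq_square)
  also have "\<dots> = - X\<^sup>2 / (2 * (\<Lambda> / (2 * sp))) + - Y\<^sup>2 / (2 * (\<Lambda> / (2 * sp))) + - (X - Y)\<^sup>2 / (2 * (2 * (2 * sq)))"
  proof -
    \<comment> \<open>the difference of the two sides is \<open>(4 sq sp + \<Lambda> - 1) (X - Y)\<^sup>2 / (8 sq \<Lambda>)\<close>\<close>
    have "4 * sq * sp + \<Lambda> = 1"
      by (simp add: \<Lambda>_def gkp_Lambda_def)
    then show ?thesis
      using \<Lambda> sq sp by (simp add: \<Lambda>_def field_simps power2_eq_square) (simp add: algebra_simps gkp_Lambda_def)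
  qed
  finally show ?thesis .
qed

lemma gkp_theta_term_eq_comb_term:
  fixes sq sp \<Gamma> \<alpha> \<beta> :: real and s t :: int
  assumes sq: "sq > 0" and sp: "sp > 0" and \<Gamma>: "\<Gamma> \<noteq> 0" and \<Lambda>: "gkp_Lambda sq sp > 0"
  defines "\<Lambda> \<equiv> gkp_Lambda sq sp"
  shows "exp (- (pi * (sp * \<Gamma>\<^sup>2 / (2 * pi * \<Lambda>))) * (of_int (s + t) + (\<alpha> + \<beta>))\<^sup>2)
      * exp (- (pi / (2 * pi * sq * \<Lambda> / \<Gamma>\<^sup>2)) * (of_int t + (\<beta> - (of_int (s + t) + (\<alpha> + \<beta>)) / 2))\<^sup>2)
    = sqrt (2 * pi * (2 * (2 * sq))) * (comb_weight (\<Lambda> / (2 * sp)) \<Gamma> \<alpha> s * comb_weight (\<Lambda> / (2 * sp)) \<Gamma> \<beta> t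
      * gauss (2 * (2 * sq)) ((of_int s + \<alpha>) * \<Gamma> - (of_int t + \<beta>) * \<Gamma>))"
proof -
  define X Y where "X = (of_int s + \<alpha>) * \<Gamma>" and "Y = (of_int t + \<beta>) * \<Gamma>"
  have "of_int (s + t) + (\<alpha> + \<beta>) = (X + Y) / \<Gamma>"
    and "of_int t + (\<beta> - (of_int (s + t) + (\<alpha> + \<beta>)) / 2) = (Y - X) / (2 * \<Gamma>)"
    using \<Gamma> by (simp_all add: X_def Y_def field_simps)
  then have "exp (- (pi * (sp * \<Gamma>\<^sup>2 / (2 * pi * \<Lambda>))) * (of_int (s + t) + (\<alpha> + \<beta>))\<^sup>2)
      * exp (- (pi / (2 * pi * sq * \<Lambda> / \<Gamma>\<^sup>2)) * (of_int t + (\<beta> - (of_int (s + t) + (\<alpha> + \<beta>)) / 2))\<^sup>2)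
    = exp (- X\<^sup>2 / (2 * (\<Lambda> / (2 * sp)))) * exp (- Y\<^sup>2 / (2 * (\<Lambda> / (2 * sp))))
      * exp (- (X - Y)\<^sup>2 / (2 * (2 * (2 * sq))))"
    using gkp_exponent_identity[OF sq sp \<Gamma> \<Lambda>, of X Y] by (simp add: \<Lambda>_def flip: exp_add)
  also have "\<dots> = sqrt (2 * pi * (2 * (2 * sq))) * (comb_weight (\<Lambda> / (2 * sp)) \<Gamma> \<alpha> s
      * comb_weight (\<Lambda> / (2 * sp)) \<Gamma> \<beta> t * gauss (2 * (2 * sq)) (X - Y))"
    using sq by (simp add: comb_weight_def gauss_def X_def Y_def)
  finally show ?thesis
    by (simp add: X_def Y_def)
qed

lemma infsum_infsum_int_pair_shear:
  fixes E :: "int \<times> int \<Rightarrow> 'a::banach"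
  assumes "(\<lambda>p. E (fst p + snd p, snd p)) summable_on UNIV"
  shows "(\<Sum>\<^sub>\<infinity>n. \<Sum>\<^sub>\<infinity>k. E (n, k)) = (\<Sum>\<^sub>\<infinity>p. E (fst p + snd p, snd p))"
proof -
  define \<phi> where "\<phi> p = (fst p + snd p, snd p)" for p :: "int \<times> int"
  have bij: "bij_betw \<phi> UNIV UNIV"
    by (rule bij_betwI[where g = "\<lambda>p. (fst p - snd p, snd p)"]) (auto simp: \<phi>_def)
  have "E summable_on UNIV"
    using summable_on_reindex_bij_betw[OF bij, of E] assms by (simp add: \<phi>_def)
  then have "(\<Sum>\<^sub>\<infinity>n. \<Sum>\<^sub>\<infinity>k. E (n, k)) = (\<Sum>\<^sub>\<infinity>p. E p)"
    using infsum_Sigma_banach[of E UNIV "\<lambda>_. UNIV"] by simp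
  also have "\<dots> = (\<Sum>\<^sub>\<infinity>p. E (\<phi> p))"
    by (rule infsum_reindex_bij_betw[OF bij, symmetric])
  finally show ?thesis
    by (simp add: \<phi>_def)
qed

lemma gkp_periodization_sum_eq_overlap:
  fixes sq sp \<Gamma> \<alpha> \<beta> :: real
  assumes sq: "sq > 0" and sp: "sp > 0" and \<Gamma>: "\<Gamma> \<noteq> 0" and \<Lambda>: "gkp_Lambda sq sp > 0"
  defines "\<Lambda> \<equiv> gkp_Lambda sq sp"
  shows "(\<Sum>\<^sub>\<infinity>n::int. exp (- (pi * (sp * \<Gamma>\<^sup>2 / (2 * pi * \<Lambda>))) * (of_int n + (\<alpha> + \<beta>))\<^sup>2)
        * gauss_periodization (pi / (2 * pi * sq * \<Lambda> / \<Gamma>\<^sup>2)) (\<beta> - (of_int n + (\<alpha> + \<beta>)) / 2))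
    = sqrt (2 * pi * (2 * (2 * sq))) * (\<integral>q. gkp_comb sq sp \<Gamma> \<alpha> q * gkp_comb sq sp \<Gamma> \<beta> q \<partial>lborel)"
proof -
  define \<mu> where "\<mu> = \<Lambda> / (2 * sp)"
  have \<mu>: "\<mu> > 0"
    using \<Lambda> sp by (simp add: \<mu>_def \<Lambda>_def)
  define E where "E p = exp (- (pi * (sp * \<Gamma>\<^sup>2 / (2 * pi * \<Lambda>))) * (of_int (fst p) + (\<alpha> + \<beta>))\<^sup>2)
      * exp (- (pi / (2 * pi * sq * \<Lambda> / \<Gamma>\<^sup>2)) * (of_int (snd p) + (\<beta> - (of_int (fst p) + (\<alpha> + \<beta>)) / 2))\<^sup>2)"
    for p :: "int \<times> int"
  define W where "W p = comb_weight \<mu> \<Gamma> \<alpha> (fst p) * comb_weight \<mu> \<Gamma> \<beta> (snd p)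
      * gauss (2 * (2 * sq)) ((of_int (fst p) + \<alpha>) * \<Gamma> - (of_int (snd p) + \<beta>) * \<Gamma>)" for p :: "int \<times> int"
  define C where "C = sqrt (2 * pi * (2 * (2 * sq)))"
  \<comment> \<open>the theta index \<open>(n, k) = (s + t, t)\<close> matches the pair \<open>(s, t)\<close> of comb teeth\<close>
  have E_shear: "E (fst p + snd p, snd p) = C * W p" for p
    using gkp_theta_term_eq_comb_term[OF sq sp \<Gamma> \<Lambda>, of "fst p" "snd p" \<alpha> \<beta>]
    by (simp add: E_def W_def C_def \<mu>_def \<Lambda>_def)
  have "W summable_on UNIV"
    using summable_on_comb_overlap_terms[OF \<mu> \<Gamma>, of "2 * (2 * sq)" \<alpha> \<beta>] sq
    unfolding W_def[abs_def] by (simp add: case_prod_unfold)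
  then have "(\<lambda>p. E (fst p + snd p, snd p)) summable_on UNIV"
    unfolding E_shear by (rule summable_on_cmult_right)
  have "(\<Sum>\<^sub>\<infinity>n::int. exp (- (pi * (sp * \<Gamma>\<^sup>2 / (2 * pi * \<Lambda>))) * (of_int n + (\<alpha> + \<beta>))\<^sup>2)
        * gauss_periodization (pi / (2 * pi * sq * \<Lambda> / \<Gamma>\<^sup>2)) (\<beta> - (of_int n + (\<alpha> + \<beta>)) / 2))
      = (\<Sum>\<^sub>\<infinity>n. \<Sum>\<^sub>\<infinity>k. E (n, k))"
    by (simp add: E_def gauss_periodization_def infsum_cmult_right' add_ac)
  also have "\<dots> = (\<Sum>\<^sub>\<infinity>p. E (fst p + snd p, snd p))"
    by (rule infsum_infsum_int_pair_shear) fact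
  also have "\<dots> = C * (\<Sum>\<^sub>\<infinity>p. W p)"
    unfolding E_shear by (rule infsum_cmult_right')
  also have "(\<Sum>\<^sub>\<infinity>p. W p) = (\<integral>q. gkp_comb sq sp \<Gamma> \<alpha> q * gkp_comb sq sp \<Gamma> \<beta> q \<partial>lborel)"
    using integral_comb_conv_gauss_mult[OF \<mu> \<Gamma>, of "2 * sq" \<alpha> \<beta>] sq
    by (simp add: W_def gkp_comb_def \<mu>_def \<Lambda>_def case_prod_unfold)
  finally show ?thesis
    by (simp add: C_def)
qed

lemma riemann_theta_gkp_tau:
  fixes sq sp \<Gamma> \<alpha> \<beta> :: real and A B :: rat
  assumes sq: "sq > 0" and sp: "sp > 0" and \<Gamma>: "\<Gamma> > 0" and \<Lambda>: "gkp_Lambda sq sp > 0"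
    and A: "of_rat A = \<alpha> + \<beta>" and B: "of_rat B = \<beta>"
  shows "riemann_theta 2 (\<lambda>k. if k = 0 then A else 0) (\<lambda>k. if k = 1 then B else 0) (\<lambda>_. 0) (gkp_tau sq sp \<Gamma>)
    = of_real (2 * \<Gamma> / sqrt (gkp_Lambda sq sp)
        * (\<integral>q. gkp_comb sq sp \<Gamma> \<alpha> q * gkp_comb sq sp \<Gamma> \<beta> q \<partial>lborel))"
proof -
  define \<Lambda> where "\<Lambda> = gkp_Lambda sq sp"
  define rb where "rb = 2 * pi * sq * \<Lambda> / \<Gamma>\<^sup>2"
  have rb: "rb > 0"
    using sq \<Gamma> \<Lambda> by (simp add: rb_def \<Lambda>_def)
  have "sqrt (1 / rb) * sqrt (2 * pi * (2 * (2 * sq))) = sqrt ((2 * \<Gamma>)\<^sup>2 / \<Lambda>)"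
    using sq \<Gamma> \<Lambda> by (simp add: rb_def \<Lambda>_def real_sqrt_mult[symmetric] field_simps power2_eq_square)
  also have "\<dots> = 2 * \<Gamma> / sqrt \<Lambda>"
    using \<Gamma> unfolding real_sqrt_divide real_sqrt_abs by simp
  finally have prefactor: "sqrt (1 / rb) * sqrt (2 * pi * (2 * (2 * sq))) = 2 * \<Gamma> / sqrt \<Lambda>" .
  define ra where "ra = sp * \<Gamma>\<^sup>2 / (2 * pi * \<Lambda>)"
  have ra: "ra > 0"
    using sp \<Gamma> \<Lambda> by (simp add: ra_def \<Lambda>_def)
  have "riemann_theta 2 (\<lambda>k. if k = 0 then A else 0) (\<lambda>k. if k = 1 then B else 0) (\<lambda>_. 0) (gkp_tau sq sp \<Gamma>)
      = riemann_theta 2 (\<lambda>k. if k = 0 then A else 0) (\<lambda>k. if k = 1 then B else 0) (\<lambda>_. 0)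
          (\<lambda>k l. if k = 0 \<and> l = 0 then \<i> * of_real ra else if k = 1 \<and> l = 1 then \<i> * of_real rb else - 1/2)"
    by (simp only: gkp_tau_def ra_def rb_def \<Lambda>_def)
  also have "\<dots> = of_real (sqrt (1 / rb) * (\<Sum>\<^sub>\<infinity>n::int. exp (- (pi * ra) * (of_int n + of_rat A)\<^sup>2)
        * gauss_periodization (pi / rb) (of_rat B - (of_int n + of_rat A) / 2)))"
    by (rule riemann_theta_diag_eq_periodization_sum[OF ra rb])
  also have "\<dots> = of_real (sqrt (1 / rb) * (\<Sum>\<^sub>\<infinity>n::int. exp (- (pi * (sp * \<Gamma>\<^sup>2 / (2 * pi * \<Lambda>))) * (of_int n + (\<alpha> + \<beta>))\<^sup>2)
        * gauss_periodization (pi / rb) (\<beta> - (of_int n + (\<alpha> + \<beta>)) / 2)))"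
    by (simp only: A B ra_def)
  also have "(\<Sum>\<^sub>\<infinity>n::int. exp (- (pi * (sp * \<Gamma>\<^sup>2 / (2 * pi * \<Lambda>))) * (of_int n + (\<alpha> + \<beta>))\<^sup>2)
        * gauss_periodization (pi / rb) (\<beta> - (of_int n + (\<alpha> + \<beta>)) / 2))
      = sqrt (2 * pi * (2 * (2 * sq))) * (\<integral>q. gkp_comb sq sp \<Gamma> \<alpha> q * gkp_comb sq sp \<Gamma> \<beta> q \<partial>lborel)"
    unfolding rb_def \<Lambda>_def using \<Gamma> by (intro gkp_periodization_sum_eq_overlap[OF sq sp _ \<Lambda>]) simp
  also have "sqrt (1 / rb) * (sqrt (2 * pi * (2 * (2 * sq))) * (\<integral>q. gkp_comb sq sp \<Gamma> \<alpha> q * gkp_comb sq sp \<Gamma> \<beta> q \<partial>lborel))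
      = 2 * \<Gamma> / sqrt \<Lambda> * (\<integral>q. gkp_comb sq sp \<Gamma> \<alpha> q * gkp_comb sq sp \<Gamma> \<beta> q \<partial>lborel)"
    using prefactor by (metis mult.assoc)
  finally show ?thesis
    by (simp add: \<Lambda>_def)
qed

lemma gkp_N_eq_overlap:
  "gkp_N sq sp \<Gamma> d j = 2 * \<Gamma> / sqrt (gkp_Lambda sq sp)
    * (\<integral>q. gkp_comb sq sp \<Gamma> (real j / real d) q * gkp_comb sq sp \<Gamma> (real j / real d) q \<partial>lborel)"
  by (simp add: gkp_N_def gkp_profile_def gkp_comb_def power2_eq_square)

lemma gkp_inner_eq_overlap:
  assumes "\<Gamma> \<ge> 0" and "gkp_Lambda sq sp \<ge> 0"
  shows "gkp_inner sq sp \<Gamma> d j' j = 2 * \<Gamma> / sqrt (gkp_Lambda sq sp)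
    * (\<integral>q. gkp_comb sq sp \<Gamma> (real j / real d) q * gkp_comb sq sp \<Gamma> (real j' / real d) q \<partial>lborel)
    / sqrt (gkp_N sq sp \<Gamma> d j * gkp_N sq sp \<Gamma> d j')"
proof -
  define K where "K = 2 * \<Gamma> / sqrt (gkp_Lambda sq sp)"
  define N N' where "N = gkp_N sq sp \<Gamma> d j" and "N' = gkp_N sq sp \<Gamma> d j'"
  have "K \<ge> 0"
    using assms by (simp add: K_def)
  have "sqrt (K / N') * sqrt (K / N) = sqrt (K\<^sup>2 / (N * N'))"
    by (simp add: real_sqrt_mult[symmetric] power2_eq_square mult_ac)
  also have "\<dots> = K / sqrt (N * N')"
    using \<open>K \<ge> 0\<close> by (simp add: real_sqrt_divide)
  finally have sqrt_product: "sqrt (K / N') * sqrt (K / N) = K / sqrt (N * N')" .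
  have wf: "gkp_wf sq sp \<Gamma> d i q = sqrt (K / gkp_N sq sp \<Gamma> d i) * gkp_comb sq sp \<Gamma> (real i / real d) q" for i q
    by (simp add: gkp_wf_def gkp_profile_def gkp_comb_def K_def)
  have "gkp_inner sq sp \<Gamma> d j' j = (\<integral>q. (sqrt (K / N') * sqrt (K / N))
      * (gkp_comb sq sp \<Gamma> (real j / real d) q * gkp_comb sq sp \<Gamma> (real j' / real d) q) \<partial>lborel)"
    unfolding gkp_inner_def wf N_def N'_def by (rule Bochner_Integration.integral_cong) (simp_all add: mult_ac)
  also have "\<dots> = K / sqrt (N * N')
      * (\<integral>q. gkp_comb sq sp \<Gamma> (real j / real d) q * gkp_comb sq sp \<Gamma> (real j' / real d) q \<partial>lborel)"
    unfolding integral_mult_right_zero sqrt_product ..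
  finally show ?thesis
    by (simp add: K_def N_def N'_def)
qed

theorem corollary4:
  fixes d j j' :: nat and sq sp \<Gamma> :: real
  assumes "d \<ge> 1" and "j < d" and "j' < d"
    and "0 < sq" and "sq < 1/2" and "0 < sp" and "sp < 1/2" and "\<Gamma> > 0"
  shows "let \<Lambda> = 1 - 4 * sq * sp;
             \<tau> = (\<lambda>k l. if k = 0 \<and> l = 0 then \<i> * complex_of_real (sp * \<Gamma>\<^sup>2 / (2 * pi * \<Lambda>))
                        else if k = 1 \<and> l = 1 then \<i> * complex_of_real (2 * pi * sq * \<Lambda> / \<Gamma>\<^sup>2)
                        else - 1/2)
         in complex_of_real (gkp_N sq sp \<Gamma> d j)
              = riemann_theta 2 (\<lambda>k. if k = 0 then 2 * of_nat j / of_nat d else 0)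
                                (\<lambda>k. if k = 1 then of_nat j / of_nat d else 0) (\<lambda>_. 0) \<tau>
          \<and> complex_of_real (gkp_inner sq sp \<Gamma> d j' j)
              = riemann_theta 2 (\<lambda>k. if k = 0 then (of_nat j + of_nat j') / of_nat d else 0)
                                (\<lambda>k. if k = 1 then of_nat j' / of_nat d else 0) (\<lambda>_. 0) \<tau>
                / complex_of_real (sqrt (gkp_N sq sp \<Gamma> d j * gkp_N sq sp \<Gamma> d j'))"
proof -
  have "sq * sp < 1/2 * (1/2)"
    using assms by (intro mult_strict_mono) auto
  then have \<Lambda>: "gkp_Lambda sq sp > 0"
    by (simp add: gkp_Lambda_def)
  note theta = riemann_theta_gkp_tau[OF \<open>0 < sq\<close> \<open>0 < sp\<close> \<open>\<Gamma> > 0\<close> \<Lambda>]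
  show ?thesis
    unfolding Let_def gkp_Lambda_def[symmetric] gkp_tau_def[symmetric]
  proof
    show "complex_of_real (gkp_N sq sp \<Gamma> d j) = riemann_theta 2 (\<lambda>k. if k = 0 then 2 * of_nat j / of_nat d else 0)
        (\<lambda>k. if k = 1 then of_nat j / of_nat d else 0) (\<lambda>_. 0) (gkp_tau sq sp \<Gamma>)"
      by (subst theta[where \<alpha> = "real j / real d" and \<beta> = "real j / real d"])
         (simp_all add: gkp_N_eq_overlap of_rat_divide of_rat_mult add_divide_distrib)
    show "complex_of_real (gkp_inner sq sp \<Gamma> d j' j) = riemann_theta 2 (\<lambda>k. if k = 0 then (of_nat j + of_nat j') / of_nat d else 0)
        (\<lambda>k. if k = 1 then of_nat j' / of_nat d else 0) (\<lambda>_. 0) (gkp_tau sq sp \<Gamma>)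
      / complex_of_real (sqrt (gkp_N sq sp \<Gamma> d j * gkp_N sq sp \<Gamma> d j'))"
      using \<open>\<Gamma> > 0\<close> \<Lambda>
      by (subst theta[where \<alpha> = "real j / real d" and \<beta> = "real j' / real d"])
         (simp_all add: gkp_inner_eq_overlap of_rat_divide of_rat_add add_divide_distrib)
  qed
qed

end
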